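(* Let $q$ be a prime power. Let $\mathcal{D}_1,\dots,\mathcal{D}_m$ be subsets of $R_{\mathrm{homog}}$, where each $\mathcal{D}_j$ is one of $\mathcal{T}_{L_j,P_j}$ (with $P_j$ a closed point of $\mathbb{P}^2$ and $L_j$ an $\mathbb{F}_q$-line through $P_j$), $\mathcal{S}_{Q_j}$, $\mathcal{A}_0(Q_j)$, $\mathcal{A}_{L_j}(Q_j)$ (with $Q_j\in\mathbb{P}^2(\mathbb{F}_q)$ and $L_j$ an $\mathbb{F}_q$-line through $Q_j$), or the complement in $R_{\mathrm{homog}}$ of one of these. If the points $P_j$ and $Q_j$ appearing are all distinct, then for all sufficiently large $d$, \[ \mu_d\Big(\bigcap_{j=1}^m\mathcal{D}_j\Big)=\prod_{j=1}^m\mu_d(\mathcal{D}_j). \]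
   Context: Let $R=\mathbb{F}_q[x,y,z]$, $R_d$ the homogeneous polynomials of degree $d$ (including $0$), $R_{\mathrm{homog}}=\bigcup_{d\ge1}R_d$, $\mu_d(\mathcal{A})=\#(\mathcal{A}\cap R_d)/\#R_d$. For an $\mathbb{F}_q$-point $Q$, $\mathcal{S}_Q$ is the set of $f\in R_{\mathrm{homog}}$ with $\{f=0\}$ singular at $Q$. For an $\mathbb{F}_q$-line $L$ and a closed point $P\in L$, $\mathcal{T}_{L,P}$ is the set of $f\in R_{\mathrm{homog}}$ whose restriction to $L$ vanishes to order at least $2$ at $P$ ("tangent to $L$ at $P$", including the singular case). For an $\mathbb{F}_q$-point $Q$, $\mathcal{A}_0(Q)=R_{\mathrm{homog}}\setminus\bigcup_{L}\mathcal{T}_{L,Q}$, the union over all $q+1$ $\mathbb{F}_q$-lines $L$ through $Q$, and for an $\mathbb{F}_q$-line $L\ni Q$, $\mathcal{A}_L(Q)=\mathcal{T}_{L,Q}\setminus\mathcal{S}_Q$. *)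

theory Defs
  imports "HOL-Computational_Algebra.Polynomial"
begin

text \<open>Homogeneous polynomials in x,y,z over a finite field are represented by their
coefficient functions on exponent triples (i,j,k) (monomial x^i y^j z^k).\<close>

type_synonym 'a poly3 = "nat \<times> nat \<times> nat \<Rightarrow> 'a"
type_synonym 'a triple = "'a \<times> 'a \<times> 'a"

definition supp3 :: "('a::zero) poly3 \<Rightarrow> (nat \<times> nat \<times> nat) set" where
  "supp3 f = {m. f m \<noteq> 0}"

definition Rdeg :: "nat \<Rightarrow> ('a::zero) poly3 set" where
  "Rdeg d = {f. \<forall>i j k. f (i, j, k) \<noteq> 0 \<longrightarrow> i + j + k = d}"

definition Rhomog :: "('a::zero) poly3 set" where
  "Rhomog = (\<Union>d\<in>{1..}. Rdeg d)"

definition mu :: "nat \<Rightarrow> ('a::zero) poly3 set \<Rightarrow> real" where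
  "mu d A = real (card (A \<inter> Rdeg d)) / real (card (Rdeg d :: 'a poly3 set))"

definition eval3 :: "('a::zero \<Rightarrow> 'b::comm_ring_1) \<Rightarrow> 'a poly3 \<Rightarrow> 'b triple \<Rightarrow> 'b" where
  "eval3 emb f P = (case P of (x, y, z) \<Rightarrow>
     (\<Sum>m\<in>supp3 f. case m of (i, j, k) \<Rightarrow> emb (f m) * x ^ i * y ^ j * z ^ k))"

definition dx :: "('a::comm_ring_1) poly3 \<Rightarrow> 'a poly3" where
  "dx f = (\<lambda>(i, j, k). of_nat (Suc i) * f (Suc i, j, k))"
definition dy :: "('a::comm_ring_1) poly3 \<Rightarrow> 'a poly3" where
  "dy f = (\<lambda>(i, j, k). of_nat (Suc j) * f (i, Suc j, k))"
definition dz :: "('a::comm_ring_1) poly3 \<Rightarrow> 'a poly3" where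
  "dz f = (\<lambda>(i, j, k). of_nat (Suc k) * f (i, j, Suc k))"

definition singular_at :: "('a::comm_ring_1) poly3 \<Rightarrow> 'a triple \<Rightarrow> bool" where
  "singular_at f Q \<longleftrightarrow> eval3 id f Q = 0 \<and> eval3 id (dx f) Q = 0 \<and>
      eval3 id (dy f) Q = 0 \<and> eval3 id (dz f) Q = 0"

definition on_line :: "('a \<Rightarrow> 'b::comm_ring_1) \<Rightarrow> 'a triple \<Rightarrow> 'b triple \<Rightarrow> bool" where
  "on_line emb L P \<longleftrightarrow> (case L of (a, b, c) \<Rightarrow> case P of (x, y, z) \<Rightarrow>
      emb a * x + emb b * y + emb c * z = 0)"

definition smult3 :: "'b::times \<Rightarrow> 'b triple \<Rightarrow> 'b triple" where
  "smult3 c P = (case P of (x, y, z) \<Rightarrow> (c * x, c * y, c * z))"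

text \<open>Restriction of f to the line through P and w, in the affine parameter t:
  t \<mapsto> f(P + t w), as a univariate polynomial over the extension field.\<close>
definition restr :: "('a::zero \<Rightarrow> 'b::comm_ring_1) \<Rightarrow> 'a poly3 \<Rightarrow> 'b triple \<Rightarrow> 'b triple \<Rightarrow> 'b poly" where
  "restr emb f P w = (case P of (p1, p2, p3) \<Rightarrow> case w of (w1, w2, w3) \<Rightarrow>
     (\<Sum>m\<in>supp3 f. case m of (i, j, k) \<Rightarrow>
        smult (emb (f m)) ([:p1, w1:] ^ i * [:p2, w2:] ^ j * [:p3, w3:] ^ k)))"

text \<open>The restriction of f to L vanishes to order at least 2 at P (P a geometric point
  on L representing a closed point): with a second point w of L independent of P,
  t^2 divides f(P + t w).\<close>
definition tangent_at :: "('a::zero \<Rightarrow> 'b::field) \<Rightarrow> 'a poly3 \<Rightarrow> 'a triple \<Rightarrow> 'b triple \<Rightarrow> bool" where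
  "tangent_at emb f L P \<longleftrightarrow> (\<exists>w. on_line emb L w \<and> (\<forall>c. w \<noteq> smult3 c P) \<and>
      [:0, 1:] ^ 2 dvd restr emb f P w)"

definition emb3 :: "('a \<Rightarrow> 'b) \<Rightarrow> 'a triple \<Rightarrow> 'b triple" where
  "emb3 emb P = (case P of (x, y, z) \<Rightarrow> (emb x, emb y, emb z))"

definition Tset :: "('a::zero \<Rightarrow> 'b::field) \<Rightarrow> 'a triple \<Rightarrow> 'b triple \<Rightarrow> 'a poly3 set" where
  "Tset emb L P = {f \<in> Rhomog. tangent_at emb f L P}"

definition Sset :: "'a::comm_ring_1 triple \<Rightarrow> 'a poly3 set" where
  "Sset Q = {f \<in> Rhomog. singular_at f Q}"

text \<open>A_0(Q): union over all F_q-lines L through Q (each line given by some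
  nonzero coefficient vector; repetitions of proportional vectors are harmless).\<close>
definition A0set :: "('a::{comm_ring_1} \<Rightarrow> 'b::field) \<Rightarrow> 'a triple \<Rightarrow> 'a poly3 set" where
  "A0set emb Q = Rhomog - (\<Union>L\<in>{L. L \<noteq> (0, 0, 0) \<and> on_line id L Q}. Tset emb L (emb3 emb Q))"

definition ALset :: "('a::comm_ring_1 \<Rightarrow> 'b::field) \<Rightarrow> 'a triple \<Rightarrow> 'a triple \<Rightarrow> 'a poly3 set" where
  "ALset emb L Q = Tset emb L (emb3 emb Q) - Sset Q"

datatype ('a, 'b) cond =
    CT "'a triple" "'b triple"
  | CS "'a triple"
  | CA0 "'a triple"
  | CAL "'a triple" "'a triple"

fun cond_set :: "('a::comm_ring_1 \<Rightarrow> 'b::field) \<Rightarrow> ('a, 'b) cond \<Rightarrow> 'a poly3 set" where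
  "cond_set emb (CT L P) = Tset emb L P"
| "cond_set emb (CS Q) = Sset Q"
| "cond_set emb (CA0 Q) = A0set emb Q"
| "cond_set emb (CAL L Q) = ALset emb L Q"

fun cond_pt :: "('a \<Rightarrow> 'b) \<Rightarrow> ('a, 'b) cond \<Rightarrow> 'b triple" where
  "cond_pt emb (CT L P) = P"
| "cond_pt emb (CS Q) = emb3 emb Q"
| "cond_pt emb (CA0 Q) = emb3 emb Q"
| "cond_pt emb (CAL L Q) = emb3 emb Q"

fun cond_valid :: "('a::comm_ring_1 \<Rightarrow> 'b::field) \<Rightarrow> ('a, 'b) cond \<Rightarrow> bool" where
  "cond_valid emb (CT L P) \<longleftrightarrow> L \<noteq> (0, 0, 0) \<and> P \<noteq> (0, 0, 0) \<and> on_line emb L P"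
| "cond_valid emb (CS Q) \<longleftrightarrow> Q \<noteq> (0, 0, 0)"
| "cond_valid emb (CA0 Q) \<longleftrightarrow> Q \<noteq> (0, 0, 0)"
| "cond_valid emb (CAL L Q) \<longleftrightarrow> L \<noteq> (0, 0, 0) \<and> Q \<noteq> (0, 0, 0) \<and> on_line id L Q"

text \<open>D_j: a basic set or its complement in R_homog (flag True = complement).\<close>
definition dset :: "('a::comm_ring_1 \<Rightarrow> 'b::field) \<Rightarrow> bool \<times> ('a, 'b) cond \<Rightarrow> 'a poly3 set" where
  "dset emb D = (if fst D then Rhomog - cond_set emb (snd D) else cond_set emb (snd D))"

definition field_emb :: "('a::field \<Rightarrow> 'b::field) \<Rightarrow> bool" where
  "field_emb emb \<longleftrightarrow> emb 0 = 0 \<and> emb 1 = 1 \<and> (\<forall>x y. emb (x + y) = emb x + emb y)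
      \<and> (\<forall>x y. emb (x * y) = emb x * emb y)"

text \<open>Two geometric points define the same closed point of P^2 over F_q iff they are
  Galois conjugate (q-power Frobenius iterate) up to a nonzero scalar.\<close>
definition same_closed_pt :: "nat \<Rightarrow> 'b::field triple \<Rightarrow> 'b triple \<Rightarrow> bool" where
  "same_closed_pt q P P' \<longleftrightarrow> (\<exists>n c. c \<noteq> 0 \<and> (case P of (x, y, z) \<Rightarrow>
      P' = smult3 c (x ^ (q ^ n), y ^ (q ^ n), z ^ (q ^ n))))"

end

(* Whether a form f of degree d lies in one of the basic sets attached to a point P depends only
   on the first-order jet of f at a geometric point over P, i.e. on f(P) and on the derivatives
   of f along the lines through P; this jet is additive in f. For additive maps J_1, ..., J_m on
   the finite group R_d, sets determined by the individual J_i are independent once the joint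
   map (J_1, ..., J_m) is onto the product of the images, by counting fibres.

   This surjectivity holds for large d. Take a form h of degree delta vanishing at the other
   points but not at P_i, and M divisible by the characteristic and by the order of the
   multiplicative group of the big field, so that h^M has zero derivative everywhere and
   h(P_i)^M = 1. Replacing in every monomial of f a pure power x_k^B, B = delta M, by h^M gives
   a form of the same degree with the jet of f at P_i and zero jets at the other points. The
   form h is a product of norms (products of Frobenius conjugates) of an anisotropic quadratic
   form in two linear forms cutting out P_i; such a norm vanishes at a point only if the point
   is Galois conjugate to P_i. *)

theory Submission
  imports Defs "HOL-Library.Poly_Mapping" "HOL-Library.Product_Plus" "HOL-Library.Function_Algebras"
    "HOL-Computational_Algebra.Primes"
begin

section \<open>Ring homomorphisms and finite fields\<close>

definition is_ring_hom :: "('a::comm_ring_1 \<Rightarrow> 'b::comm_ring_1) \<Rightarrow> bool" where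
  "is_ring_hom f \<longleftrightarrow>
     f 0 = 0 \<and> f 1 = 1 \<and> (\<forall>x y. f (x + y) = f x + f y) \<and> (\<forall>x y. f (x * y) = f x * f y)"

lemma is_ring_homD:
  assumes "is_ring_hom f"
  shows "f 0 = 0" "f 1 = 1" "f (x + y) = f x + f y" "f (x * y) = f x * f y"
  using assms unfolding is_ring_hom_def by auto

lemma is_ring_hom_id: "is_ring_hom id"
  by (simp add: is_ring_hom_def)

lemma field_emb_is_ring_hom: "field_emb emb \<Longrightarrow> is_ring_hom emb"
  by (simp add: field_emb_def is_ring_hom_def)

lemma ring_hom_sum: "is_ring_hom f \<Longrightarrow> f (\<Sum>i\<in>I. g i) = (\<Sum>i\<in>I. f (g i))"
  by (induction I rule: infinite_finite_induct) (auto simp: is_ring_homD)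

lemma ring_hom_power: "is_ring_hom f \<Longrightarrow> f (x ^ n) = f x ^ n"
  by (induction n) (auto simp: is_ring_homD)

lemma ring_hom_of_nat: "is_ring_hom f \<Longrightarrow> f (of_nat n) = of_nat n"
  by (induction n) (auto simp: is_ring_homD)

lemma ring_hom_diff:
  assumes "is_ring_hom f"
  shows "f (x - y) = f x - f y"
  using is_ring_homD(3)[OF assms, of "x - y" y] by (simp add: eq_diff_eq)

lemma ring_hom_eq_0_iff:
  fixes f :: "'a::field \<Rightarrow> 'b::field"
  assumes "is_ring_hom f"
  shows "f x = 0 \<longleftrightarrow> x = 0"
proof
  assume "f x = 0"
  show "x = 0"
  proof (rule ccontr)
    assume "x \<noteq> 0"
    hence "f x * f (inverse x) = 1"
      by (simp flip: is_ring_homD(4)[OF assms] add: is_ring_homD(2)[OF assms])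
    with \<open>f x = 0\<close> show False by simp
  qed
qed (simp add: is_ring_homD[OF assms])

lemma ring_hom_inj:
  fixes f :: "'a::field \<Rightarrow> 'b::field"
  assumes "is_ring_hom f"
  shows "inj f"
  by (rule injI) (metis assms ring_hom_diff ring_hom_eq_0_iff right_minus_eq)

lemma ring_hom_CHAR:
  fixes f :: "'a::field \<Rightarrow> 'b::field"
  assumes "is_ring_hom f"
  shows "CHAR('b) = CHAR('a)"
proof -
  have "of_nat n = (0::'b) \<longleftrightarrow> of_nat n = (0::'a)" for n
    by (metis assms ring_hom_eq_0_iff ring_hom_of_nat)
  thus ?thesis
    by (intro CHAR_eqI) (simp_all add: of_nat_eq_0_iff_char_dvd)
qed

lemma finite_field_power_card_minus_1:
  fixes x :: "'c::{finite,field}"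
  assumes "x \<noteq> 0"
  shows "x ^ (card (UNIV :: 'c set) - 1) = 1"
proof -
  have "(\<Prod>y\<in>UNIV - {0}. x * y) = (\<Prod>y\<in>UNIV - {0::'c}. y)"
    by (rule prod.reindex_bij_witness[of _ "\<lambda>y. y / x" "\<lambda>y. x * y"]) (use assms in auto)
  moreover have "card (UNIV - {0::'c}) = card (UNIV :: 'c set) - 1"
    by (simp add: card_Diff_singleton)
  moreover have "(\<Prod>y\<in>UNIV - {0::'c}. y) \<noteq> 0"
    by simp
  ultimately show ?thesis
    by (simp add: prod.distrib)
qed

lemma card_finite_field_ge_2: "card (UNIV :: 'c::{finite,field} set) \<ge> 2"
  using card_mono[of "UNIV :: 'c set" "{0, 1}"] by simp

lemma finite_field_power_card:
  fixes x :: "'c::{finite,field}"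
  shows "x ^ card (UNIV :: 'c set) = x"
proof -
  have "x ^ card (UNIV :: 'c set) = x * x ^ (card (UNIV :: 'c set) - 1)"
    by (metis finite_UNIV_card_ge_0 finite power_eq_if less_not_refl2)
  then show ?thesis
    using finite_field_power_card_minus_1[of x] by (cases "x = 0") auto
qed

lemma prime_CHAR_finite_field: "prime CHAR('c::{finite,field})"
  by (simp add: finite_imp_CHAR_pos prime_CHAR_semidom)

lemma of_nat_mod_CHAR: "of_nat (n mod CHAR('c)) = (of_nat n :: 'c::comm_ring_1)"
proof -
  have "(of_nat n :: 'c) = of_nat (n div CHAR('c) * CHAR('c) + n mod CHAR('c))"
    by simp
  thus ?thesis
    by (simp only: of_nat_add of_nat_mult of_nat_CHAR) simp
qed

lemma finite_field_inverse_of_nat: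
  assumes "(of_nat k :: 'c::{finite,field}) \<noteq> 0"
  shows "inverse (of_nat k :: 'c) = of_nat (k ^ (card (UNIV :: 'c set) - 2))"
proof -
  have "card (UNIV :: 'c set) - 1 = Suc (card (UNIV :: 'c set) - 2)"
    using card_finite_field_ge_2[where 'c='c] by simp
  hence "(of_nat k :: 'c) * of_nat k ^ (card (UNIV :: 'c set) - 2) = 1"
    using finite_field_power_card_minus_1[OF assms] by simp
  thus ?thesis
    by (simp add: inverse_unique)
qed

definition add_closed :: "'c::monoid_add set \<Rightarrow> bool" where
  "add_closed H \<longleftrightarrow> 0 \<in> H \<and> (\<forall>a\<in>H. \<forall>b\<in>H. a + b \<in> H)"

lemma add_closed_of_nat_mult:
  fixes H :: "'c::semiring_1 set"
  assumes "add_closed H" "a \<in> H"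
  shows "of_nat k * a \<in> H"
  by (induction k) (use assms in \<open>auto simp: add_closed_def distrib_right\<close>)

lemma add_closed_uminus:
  fixes H :: "'c::{finite,field} set"
  assumes "add_closed H" "a \<in> H"
  shows "- a \<in> H"
proof -
  have "CHAR('c) > 0"
    by (simp add: finite_imp_CHAR_pos)
  hence "(of_nat (CHAR('c) - 1) :: 'c) + 1 = of_nat (Suc (CHAR('c) - 1))"
    by simp
  also have "\<dots> = 0"
    using \<open>CHAR('c) > 0\<close> by simp
  finally have "(of_nat (CHAR('c) - 1) :: 'c) + 1 = 0" .
  hence "(of_nat (CHAR('c) - 1) :: 'c) = - 1"
    by (simp add: eq_neg_iff_add_eq_0)
  thus ?thesis
    using add_closed_of_nat_mult[OF assms, of "CHAR('c) - 1"] by simp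
qed

lemma add_closed_cancel_of_nat:
  fixes H :: "'c::{finite,field} set"
  assumes "add_closed H" "of_nat k * x \<in> H" "(of_nat k :: 'c) \<noteq> 0"
  shows "x \<in> H"
proof -
  have "(of_nat (k ^ (card (UNIV :: 'c set) - 2)) :: 'c) * of_nat k = 1"
    using finite_field_inverse_of_nat[OF assms(3)] left_inverse[OF assms(3)] by simp
  hence "x = of_nat (k ^ (card (UNIV :: 'c set) - 2)) * (of_nat k * x)"
    by (simp add: mult.assoc[symmetric])
  thus ?thesis
    by (metis add_closed_of_nat_mult assms(1,2))
qed

lemma inj_on_add_of_nat_mult:
  fixes H :: "'c::{finite,field} set"
  assumes H: "add_closed H" and x: "x \<notin> H"
  shows "inj_on (\<lambda>(h, k). h + of_nat k * x) (H \<times> {..<CHAR('c)})"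
proof -
  have no_collision: False
    if "ha \<in> H" "hb \<in> H" "ka < kb" "kb < CHAR('c)" "ha + of_nat ka * x = hb + of_nat kb * x"
    for ha hb ka kb
  proof -
    have "(of_nat (kb - ka) :: 'c) \<noteq> 0"
      using that(3,4) unfolding of_nat_eq_0_iff_char_dvd by (simp add: nat_dvd_not_less)
    moreover have "of_nat (kb - ka) * x = ha + - hb"
      using that(3,5) by (simp add: of_nat_diff algebra_simps)
    moreover have "ha + - hb \<in> H"
      using H that(1,2) add_closed_uminus unfolding add_closed_def by blast
    ultimately show False
      using add_closed_cancel_of_nat[OF H] x by metis
  qed
  show ?thesis
  proof (rule inj_onI, clarify)
    fix h1 k1 h2 k2
    assume "h1 \<in> H" "k1 < CHAR('c)" "h2 \<in> H" "k2 < CHAR('c)"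
      and eq: "h1 + of_nat k1 * x = h2 + of_nat k2 * x"
    hence "k1 = k2"
      using no_collision[of h1 h2 k1 k2] no_collision[of h2 h1 k2 k1] by fastforce
    thus "h1 = h2 \<and> k1 = k2"
      using eq by simp
  qed
qed

lemma add_closed_extend:
  fixes H :: "'c::{finite,field} set"
  assumes H: "add_closed H" and x: "x \<notin> H"
  defines "H' \<equiv> (\<lambda>(h, k). h + of_nat k * x) ` (H \<times> {..<CHAR('c)})"
  shows "add_closed H'" "card H' = card H * CHAR('c)"
proof -
  let ?p = "CHAR('c)"
  show "card H' = card H * ?p"
    unfolding H'_def using inj_on_add_of_nat_mult[OF H x]
    by (simp add: card_image card_cartesian_product)
  have "?p > 0"
    by (simp add: finite_imp_CHAR_pos)
  hence mod_p: "h + of_nat k * x \<in> H'" if "h \<in> H" for h k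
    unfolding H'_def using that by (auto intro!: image_eqI[of _ _ "(h, k mod ?p)"] simp: of_nat_mod_CHAR)
  show "add_closed H'"
    unfolding add_closed_def
  proof (intro conjI ballI)
    show "0 \<in> H'"
      using mod_p[of 0 0] H by (simp add: add_closed_def)
    fix a b assume "a \<in> H'" "b \<in> H'"
    then obtain h1 k1 h2 k2 where "h1 \<in> H" "h2 \<in> H" "a = h1 + of_nat k1 * x" "b = h2 + of_nat k2 * x"
      unfolding H'_def by auto
    moreover have "h1 + h2 \<in> H"
      using H \<open>h1 \<in> H\<close> \<open>h2 \<in> H\<close> by (simp add: add_closed_def)
    ultimately show "a + b \<in> H'"
      using mod_p[of "h1 + h2" "k1 + k2"] by (simp add: algebra_simps)
  qed
qed

text \<open>Additively closed sets are \<open>\<bbbF>\<^sub>p\<close>-subspaces; adjoining one element at a time multiplies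
  their size by \<open>p\<close> until the whole field is reached.\<close>

lemma card_finite_field_CHAR_power: "\<exists>n. card (UNIV :: 'c::{finite,field} set) = CHAR('c) ^ n"
proof -
  have "\<exists>n. card (UNIV :: 'c set) = CHAR('c) ^ n"
    if "add_closed H" "card H = CHAR('c) ^ m" for H :: "'c set" and m
    using that
  proof (induction "card (UNIV :: 'c set) - card H" arbitrary: H m rule: less_induct)
    case less
    show ?case
    proof (cases "H = UNIV")
      case False
      then obtain x where "x \<notin> H"
        by blast
      let ?H' = "(\<lambda>(h, k). h + of_nat k * x) ` (H \<times> {..<CHAR('c)})"
      have "card ?H' = CHAR('c) ^ Suc m"
        using add_closed_extend(2)[OF less.prems(1) \<open>x \<notin> H\<close>] less.prems(2) by simp
      moreover have "card H < card ?H'"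
        using \<open>card ?H' = _\<close> less.prems(2) prime_gt_1_nat[OF prime_CHAR_finite_field[where 'c='c]]
        by simp
      moreover have "card ?H' \<le> card (UNIV :: 'c set)"
        by (rule card_mono) auto
      ultimately show ?thesis
        using less.hyps[of ?H'] add_closed_extend(1)[OF less.prems(1) \<open>x \<notin> H\<close>] by fastforce
    qed (use less.prems in auto)
  qed
  moreover have "add_closed {0::'c}" "card {0::'c} = CHAR('c) ^ 0"
    by (simp_all add: add_closed_def)
  ultimately show ?thesis
    by blast
qed

locale field_embedding =
  fixes emb :: "'a::{finite,field} \<Rightarrow> 'b::{finite,field}"
  assumes emb: "is_ring_hom emb"
begin

lemma frobenius_is_ring_hom: "is_ring_hom (\<lambda>x::'b. x ^ (card (UNIV :: 'a set) ^ k))"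
proof -
  obtain r where r: "card (UNIV :: 'a set) = CHAR('b) ^ r"
    using card_finite_field_CHAR_power[where 'c='a] ring_hom_CHAR[OF emb] by auto
  have "card (UNIV :: 'a set) ^ k = CHAR('b) ^ (r * k)"
    unfolding r by (simp add: power_mult)
  moreover have "card (UNIV :: 'a set) ^ k > 0"
    by (simp add: finite_UNIV_card_ge_0)
  ultimately show ?thesis
    unfolding is_ring_hom_def
    using freshmans_dream'[OF prime_CHAR_finite_field[where 'c='b]] by (simp add: power_mult_distrib)
qed

lemma frobenius_periodic: "\<exists>e>0. \<forall>x::'b. x ^ (card (UNIV :: 'a set) ^ e) = x"
proof -
  define F where "F = (\<lambda>n (x::'b). x ^ (card (UNIV :: 'a set) ^ n))"
  have "\<not> inj F"
    using finite_imageD[of F UNIV] finite_subset[of "range F" "UNIV :: ('b \<Rightarrow> 'b) set"] by auto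
  then obtain a b where "F a = F b" "a < b"
    unfolding inj_def by (metis linorder_neqE_nat)
  have "x ^ (card (UNIV :: 'a set) ^ (b - a)) = x" for x :: 'b
  proof -
    have "F a x = F a (x ^ (card (UNIV :: 'a set) ^ (b - a)))"
      using fun_cong[OF \<open>F a = F b\<close>, of x] \<open>a < b\<close>
      by (simp add: F_def flip: power_mult power_add)
    thus ?thesis
      using ring_hom_inj[OF frobenius_is_ring_hom[of a]] unfolding F_def inj_def by metis
  qed
  thus ?thesis
    using \<open>a < b\<close> by (intro exI[of _ "b - a"]) auto
qed

lemma power_card_eq_self_iff: "(x::'b) ^ card (UNIV :: 'a set) = x \<longleftrightarrow> x \<in> range emb"
proof -
  let ?q = "card (UNIV :: 'a set)"
  have sub: "range emb \<subseteq> {x::'b. x ^ ?q = x}"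
    by (auto simp flip: ring_hom_power[OF emb] simp: finite_field_power_card)
  define P where "P = [:0, -1:] + monom (1::'b) ?q"
  have "degree P = ?q"
    unfolding P_def using card_finite_field_ge_2[where 'c='a]
    by (subst degree_add_eq_right) (auto simp: degree_monom_eq)
  hence "P \<noteq> 0"
    using card_finite_field_ge_2[where 'c='a] by auto
  have "card {x::'b. x ^ ?q = x} \<le> ?q"
    using card_poly_roots_bound[OF \<open>P \<noteq> 0\<close>] \<open>degree P = ?q\<close> by (simp add: P_def poly_monom)
  moreover have "card (range emb) = ?q"
    using ring_hom_inj[OF emb] by (simp add: card_image)
  ultimately have "range emb = {x. x ^ ?q = x}"
    using card_mono[OF _ sub] by (intro card_subset_eq[OF _ sub]) auto
  thus ?thesis
    by blast
qed

end

section \<open>Polynomials in three variables\<close>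

text \<open>Polynomials in \<open>x, y, z\<close> with their ring structure, as finitely supported coefficient
  functions on exponent triples; \<open>poly_mapping.lookup\<close> turns them into elements of \<open>poly3\<close>.\<close>

type_synonym 'a pm3 = "(nat \<times> nat \<times> nat) \<Rightarrow>\<^sub>0 'a"

definition mono_val :: "nat \<times> nat \<times> nat \<Rightarrow> 'b::comm_ring_1 triple \<Rightarrow> 'b" where
  "mono_val m X = (case m of (i, j, k) \<Rightarrow> case X of (x, y, z) \<Rightarrow> x ^ i * y ^ j * z ^ k)"

lemma mono_val_simps [simp]: "mono_val (i, j, k) (x, y, z) = x ^ i * y ^ j * z ^ k"
  by (simp add: mono_val_def)

lemma mono_val_add: "mono_val (m + n) X = mono_val m X * mono_val n X"
  by (cases m; cases n; cases X) (simp add: power_add algebra_simps)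

lemma mono_val_0: "mono_val 0 X = 1"
  by (cases X) (simp add: zero_prod_def)

lemma ring_hom_mono_val: "is_ring_hom f \<Longrightarrow> f (mono_val m X) = mono_val m (emb3 f X)"
  by (cases m; cases X) (simp add: emb3_def is_ring_homD ring_hom_power)

definition pm_eval :: "('a::zero \<Rightarrow> 'b::comm_ring_1) \<Rightarrow> 'a pm3 \<Rightarrow> 'b triple \<Rightarrow> 'b" where
  "pm_eval \<phi> p X = (\<Sum>m\<in>Poly_Mapping.keys p. \<phi> (poly_mapping.lookup p m) * mono_val m X)"

lemma pm_eval_superset:
  assumes "finite S" "Poly_Mapping.keys p \<subseteq> S" "\<phi> 0 = 0"
  shows "pm_eval \<phi> p X = (\<Sum>m\<in>S. \<phi> (poly_mapping.lookup p m) * mono_val m X)"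
  unfolding pm_eval_def by (rule sum.mono_neutral_left) (use assms in \<open>auto simp: in_keys_iff\<close>)

lemma pm_eval_0 [simp]: "pm_eval \<phi> 0 X = 0"
  by (simp add: pm_eval_def)

lemma pm_eval_add:
  assumes "\<phi> 0 = 0" "\<And>x y. \<phi> (x + y) = \<phi> x + \<phi> y"
  shows "pm_eval \<phi> (p + q) X = pm_eval \<phi> p X + pm_eval \<phi> q X"
proof -
  let ?S = "Poly_Mapping.keys p \<union> Poly_Mapping.keys q"
  have "pm_eval \<phi> (p + q) X = (\<Sum>m\<in>?S. \<phi> (poly_mapping.lookup (p + q) m) * mono_val m X)"
    using keys_add[of p q] assms by (intro pm_eval_superset) auto
  also have "\<dots> = (\<Sum>m\<in>?S. \<phi> (poly_mapping.lookup p m) * mono_val m X) + (\<Sum>m\<in>?S. \<phi> (poly_mapping.lookup q m) * mono_val m X)"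
    by (simp add: lookup_add assms sum.distrib distrib_right)
  also have "\<dots> = pm_eval \<phi> p X + pm_eval \<phi> q X"
    by (subst (1 2) pm_eval_superset[of ?S]) (use assms in auto)
  finally show ?thesis .
qed

lemma pm_eval_single:
  assumes "\<phi> 0 = 0"
  shows "pm_eval \<phi> (Poly_Mapping.single m c) X = \<phi> c * mono_val m X"
  by (subst pm_eval_superset[of "{m}"]) (use assms in auto)

lemma pm_eval_sum:
  assumes "\<phi> 0 = 0" "\<And>x y. \<phi> (x + y) = \<phi> x + \<phi> y"
  shows "pm_eval \<phi> (\<Sum>i\<in>I. p i) X = (\<Sum>i\<in>I. pm_eval \<phi> (p i) X)"
  by (induction I rule: infinite_finite_induct) (auto simp: pm_eval_add assms)

lemma poly_mapping_sum_single:
  assumes "finite S" "Poly_Mapping.keys p \<subseteq> S"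
  shows "p = (\<Sum>m\<in>S. Poly_Mapping.single m (poly_mapping.lookup p m))"
proof (rule poly_mapping_eqI)
  fix k
  have "poly_mapping.lookup (\<Sum>m\<in>S. Poly_Mapping.single m (poly_mapping.lookup p m)) k = (\<Sum>m\<in>S. if m = k then poly_mapping.lookup p k else 0)"
    by (auto simp: lookup_sum lookup_single when_def intro: sum.cong)
  also have "\<dots> = poly_mapping.lookup p k"
    using assms by (auto simp: in_keys_iff)
  finally show "poly_mapping.lookup p k = poly_mapping.lookup (\<Sum>m\<in>S. Poly_Mapping.single m (poly_mapping.lookup p m)) k"
    by simp
qed

lemma times_poly_mapping_expand:
  fixes p q :: "'a::comm_ring_1 pm3"
  shows "p * q = (\<Sum>m\<in>Poly_Mapping.keys p. \<Sum>n\<in>Poly_Mapping.keys q. Poly_Mapping.single (m + n) (poly_mapping.lookup p m * poly_mapping.lookup q n))"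
  by (subst (1) poly_mapping_sum_single[of "Poly_Mapping.keys p" p], simp, simp,
      subst (1) poly_mapping_sum_single[of "Poly_Mapping.keys q" q]) (simp_all add: sum_product mult_single)

lemma pm_eval_mult:
  assumes "is_ring_hom \<phi>"
  shows "pm_eval \<phi> (p * q) X = pm_eval \<phi> p X * pm_eval \<phi> q X"
proof -
  have "pm_eval \<phi> (p * q) X = (\<Sum>m\<in>Poly_Mapping.keys p. \<Sum>n\<in>Poly_Mapping.keys q.
     \<phi> (poly_mapping.lookup p m * poly_mapping.lookup q n) * mono_val (m + n) X)"
    by (subst times_poly_mapping_expand) (simp add: pm_eval_sum pm_eval_single is_ring_homD[OF assms])
  also have "\<dots> = pm_eval \<phi> p X * pm_eval \<phi> q X"
    by (simp add: pm_eval_def sum_product is_ring_homD[OF assms] mono_val_add mult_ac)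
  finally show ?thesis .
qed

lemma pm_eval_1: "is_ring_hom \<phi> \<Longrightarrow> pm_eval \<phi> 1 X = 1"
  using pm_eval_single[of \<phi> 0 1 X] by (simp add: is_ring_homD mono_val_0)

lemma pm_eval_power: "is_ring_hom \<phi> \<Longrightarrow> pm_eval \<phi> (p ^ n) X = pm_eval \<phi> p X ^ n"
  by (induction n) (auto simp: pm_eval_1 pm_eval_mult)

lemma pm_eval_prod: "is_ring_hom \<phi> \<Longrightarrow> pm_eval \<phi> (\<Prod>i\<in>I. p i) X = (\<Prod>i\<in>I. pm_eval \<phi> (p i) X)"
  by (induction I rule: infinite_finite_induct) (auto simp: pm_eval_1 pm_eval_mult)

lemma ring_hom_pm_eval:
  assumes "is_ring_hom \<psi>"
  shows "\<psi> (pm_eval \<phi> p X) = pm_eval (\<psi> \<circ> \<phi>) p (emb3 \<psi> X)"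
  unfolding pm_eval_def by (simp add: ring_hom_sum[OF assms] is_ring_homD[OF assms] ring_hom_mono_val[OF assms])

lemma lookup_map_zero: "\<psi> 0 = 0 \<Longrightarrow> poly_mapping.lookup (Poly_Mapping.map \<psi> p) k = \<psi> (poly_mapping.lookup p k)"
  by (simp add: map.rep_eq when_def)

lemma keys_map_subset: "Poly_Mapping.keys (Poly_Mapping.map \<psi> p) \<subseteq> Poly_Mapping.keys p"
  by (auto simp: in_keys_iff map.rep_eq when_def)

lemma pm_eval_map:
  assumes "\<phi> 0 = 0" "\<psi> 0 = 0"
  shows "pm_eval \<phi> (Poly_Mapping.map \<psi> p) X = pm_eval (\<phi> \<circ> \<psi>) p X"
  by (subst (1 2) pm_eval_superset[of "Poly_Mapping.keys p"])
     (use assms keys_map_subset[of \<psi> p] in \<open>auto simp: lookup_map_zero\<close>)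

lemma map_as_sum_single:
  assumes "\<psi> 0 = 0"
  shows "Poly_Mapping.map \<psi> p = (\<Sum>m\<in>Poly_Mapping.keys p. Poly_Mapping.single m (\<psi> (poly_mapping.lookup p m)))"
  by (subst poly_mapping_sum_single[of "Poly_Mapping.keys p"]) (simp_all add: keys_map_subset lookup_map_zero assms)

lemma map_add_additive:
  assumes "\<psi> 0 = 0" "\<And>x y. \<psi> (x + y) = \<psi> x + \<psi> y"
  shows "Poly_Mapping.map \<psi> (p + q) = Poly_Mapping.map \<psi> p + Poly_Mapping.map \<psi> q"
  by (rule poly_mapping_eqI) (simp add: lookup_map_zero assms lookup_add)

lemma map_sum_additive:
  assumes "\<psi> 0 = 0" "\<And>x y. \<psi> (x + y) = \<psi> x + \<psi> y"
  shows "Poly_Mapping.map \<psi> (\<Sum>i\<in>I. p i) = (\<Sum>i\<in>I. Poly_Mapping.map \<psi> (p i))"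
  by (induction I rule: infinite_finite_induct) (auto simp: map_add_additive assms map_eq_zero_iff)

lemma map_mult_ring_hom:
  fixes p q :: "'a::comm_ring_1 pm3"
  assumes "is_ring_hom \<psi>"
  shows "Poly_Mapping.map \<psi> (p * q) = Poly_Mapping.map \<psi> p * Poly_Mapping.map \<psi> q"
proof -
  note hom = is_ring_homD[OF assms]
  have "Poly_Mapping.map \<psi> (p * q) = (\<Sum>m\<in>Poly_Mapping.keys p. \<Sum>n\<in>Poly_Mapping.keys q.
      Poly_Mapping.single (m + n) (\<psi> (poly_mapping.lookup p m) * \<psi> (poly_mapping.lookup q n)))"
    by (subst times_poly_mapping_expand) (simp add: map_sum_additive hom)
  also have "\<dots> = (\<Sum>m\<in>Poly_Mapping.keys p. Poly_Mapping.single m (\<psi> (poly_mapping.lookup p m))) *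
      (\<Sum>n\<in>Poly_Mapping.keys q. Poly_Mapping.single n (\<psi> (poly_mapping.lookup q n)))"
    by (simp add: sum_product mult_single)
  also have "\<dots> = Poly_Mapping.map \<psi> p * Poly_Mapping.map \<psi> q"
    by (simp only: map_as_sum_single[where \<psi> = \<psi>, OF hom(1)])
  finally show ?thesis .
qed

lemma map_1_ring_hom: "is_ring_hom \<psi> \<Longrightarrow> Poly_Mapping.map \<psi> (1 :: 'a::comm_ring_1 pm3) = 1"
  using map_single[of 1 \<psi> 0] by (simp add: is_ring_homD)

lemma map_prod_ring_hom:
  fixes p :: "'i \<Rightarrow> 'a::comm_ring_1 pm3"
  shows "is_ring_hom \<psi> \<Longrightarrow> Poly_Mapping.map \<psi> (\<Prod>i\<in>I. p i) = (\<Prod>i\<in>I. Poly_Mapping.map \<psi> (p i))"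
  by (induction I rule: infinite_finite_induct) (auto simp: map_1_ring_hom map_mult_ring_hom)

lemma map_map_zero:
  "\<psi>1 0 = 0 \<Longrightarrow> \<psi>2 0 = 0 \<Longrightarrow> Poly_Mapping.map \<psi>1 (Poly_Mapping.map \<psi>2 p) = Poly_Mapping.map (\<psi>1 \<circ> \<psi>2) p"
  by (rule poly_mapping_eqI) (simp add: lookup_map_zero)

lemma map_ident: "Poly_Mapping.map (\<lambda>x. x) p = p"
  by (rule poly_mapping_eqI) (simp add: lookup_map_zero)

definition tdeg :: "nat \<times> nat \<times> nat \<Rightarrow> nat" where
  "tdeg m = fst m + fst (snd m) + snd (snd m)"

lemma tdeg_add: "tdeg (m + n) = tdeg m + tdeg n"
  by (simp add: tdeg_def)

definition homog :: "nat \<Rightarrow> ('a::zero) pm3 \<Rightarrow> bool" where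
  "homog d p \<longleftrightarrow> (\<forall>m\<in>Poly_Mapping.keys p. tdeg m = d)"

lemma homog_mult:
  fixes p q :: "'a::comm_ring_1 pm3"
  assumes "homog a p" "homog b q"
  shows "homog (a + b) (p * q)"
  unfolding homog_def
proof
  fix m assume "m \<in> Poly_Mapping.keys (p * q)"
  then obtain m1 m2 where "m = m1 + m2" "m1 \<in> Poly_Mapping.keys p" "m2 \<in> Poly_Mapping.keys q"
    using keys_mult[of p q] by blast
  then show "tdeg m = a + b"
    using assms by (simp add: homog_def tdeg_add)
qed

lemma homog_1: "homog 0 (1 :: 'a::comm_ring_1 pm3)"
  by (simp add: homog_def tdeg_def)

lemma homog_power:
  fixes p :: "'a::comm_ring_1 pm3"
  shows "homog a p \<Longrightarrow> homog (a * n) (p ^ n)"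
  by (induction n) (simp_all add: homog_1 homog_mult add.commute)

lemma homog_single: "tdeg m = d \<Longrightarrow> homog d (Poly_Mapping.single m c)"
  by (simp add: homog_def)

lemma homog_0: "homog d 0"
  by (simp add: homog_def)

lemma homog_add: "homog d p \<Longrightarrow> homog d q \<Longrightarrow> homog d (p + q)"
  using keys_add[of p q] unfolding homog_def by blast

lemma homog_sum: "(\<And>i. i \<in> I \<Longrightarrow> homog d (p i)) \<Longrightarrow> homog d (\<Sum>i\<in>I. p i)"
  by (induction I rule: infinite_finite_induct) (auto simp: homog_0 homog_add)

lemma homog_prod:
  fixes p :: "'i \<Rightarrow> 'a::comm_ring_1 pm3"
  shows "finite I \<Longrightarrow> (\<And>i. i \<in> I \<Longrightarrow> homog a (p i)) \<Longrightarrow> homog (a * card I) (\<Prod>i\<in>I. p i)"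
  by (induction I rule: finite_induct) (simp_all add: homog_1 homog_mult)

lemma homog_map: "homog d p \<Longrightarrow> homog d (Poly_Mapping.map \<psi> p)"
  using keys_map_subset[of \<psi> p] unfolding homog_def by blast

section \<open>Forms separating closed points\<close>

text \<open>The map sending \<open>(s\<^sub>1, s\<^sub>2)\<close> to the coefficients of \<open>(X - s\<^sub>1)(X - s\<^sub>2)\<close> identifies
  \<open>(0, 1)\<close> and \<open>(1, 0)\<close>, so by finiteness it misses some pair of coefficients.\<close>

lemma exists_anisotropic_quadratic: "\<exists>r1 r0::'b::{finite,field}. \<forall>s. s * s + r1 * s + r0 \<noteq> 0"
proof -
  define \<Phi> where "\<Phi> = (\<lambda>(s1::'b, s2::'b). (- (s1 + s2), s1 * s2))"
  have "\<Phi> (0, 1) = \<Phi> (1, 0)"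
    by (simp add: \<Phi>_def)
  have "\<not> inj \<Phi>"
  proof
    assume "inj \<Phi>"
    hence "((0::'b), (1::'b)) = (1, 0)"
      using \<open>\<Phi> (0, 1) = \<Phi> (1, 0)\<close> by (rule injD)
    thus False
      by simp
  qed
  hence "\<not> surj \<Phi>"
    using finite_UNIV_surj_inj[OF finite_UNIV, of \<Phi>] by blast
  then obtain r where "r \<notin> range \<Phi>"
    by blast
  then obtain r1 r0 where r: "(r1, r0) \<notin> range \<Phi>"
    by (cases r) blast
  have "s * s + r1 * s + r0 \<noteq> 0" for s
  proof
    assume "s * s + r1 * s + r0 = 0"
    hence "r0 = s * (- r1 - s)"
      by (simp add: algebra_simps eq_neg_iff_add_eq_0)
    hence "\<Phi> (s, - r1 - s) = (r1, r0)"
      by (simp add: \<Phi>_def)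
    with r show False
      by (metis rangeI)
  qed
  thus ?thesis
    by blast
qed

definition lin_form :: "'b::comm_ring_1 triple \<Rightarrow> 'b triple \<Rightarrow> 'b" where
  "lin_form a X = (case a of (a1, a2, a3) \<Rightarrow> case X of (x, y, z) \<Rightarrow> a1 * x + a2 * y + a3 * z)"

definition lin_form_pm :: "'b::comm_ring_1 triple \<Rightarrow> 'b pm3" where
  "lin_form_pm a = (case a of (a1, a2, a3) \<Rightarrow> Poly_Mapping.single (1, 0, 0) a1 +
     Poly_Mapping.single (0, 1, 0) a2 + Poly_Mapping.single (0, 0, 1) a3)"

lemma pm_eval_lin_form_pm: "pm_eval id (lin_form_pm a) X = lin_form a X"
  by (cases a; cases X) (simp add: lin_form_pm_def lin_form_def pm_eval_add pm_eval_single)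

lemma homog_lin_form_pm: "homog 1 (lin_form_pm a)"
  by (cases a) (simp add: lin_form_pm_def homog_add homog_single tdeg_def)

lemma lin_form_smult3: "lin_form a (smult3 c P) = c * lin_form a P"
  by (cases a; cases P) (simp add: lin_form_def smult3_def algebra_simps)

lemma linear_eq_solve:
  fixes x :: "'b::field"
  assumes "x \<noteq> 0" "c * u + x * v = 0"
  shows "v = u / x * - c"
proof -
  have "x * v = - (c * u)"
    using assms(2) by (simp add: eq_neg_iff_add_eq_0 add.commute)
  thus ?thesis
    using assms(1) by (simp add: field_simps)
qed

lemma point_common_zero_of_lin_forms:
  fixes P :: "'b::field triple"
  assumes "P \<noteq> (0, 0, 0)"
  shows "\<exists>a b. lin_form a P = 0 \<and> lin_form b P = 0 \<and>
    (\<forall>Q. lin_form a Q = 0 \<and> lin_form b Q = 0 \<longrightarrow> (\<exists>c. Q = smult3 c P))"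
proof -
  obtain x y z where P: "P = (x, y, z)"
    by (cases P)
  consider "x \<noteq> 0" | "y \<noteq> 0" | "z \<noteq> 0"
    using assms P by auto
  then show ?thesis
  proof cases
    case 1
    have "\<exists>c. (u, v, w) = smult3 c P"
      if "lin_form (- y, x, 0) (u, v, w) = 0" "lin_form (- z, 0, x) (u, v, w) = 0" for u v w
      using linear_eq_solve[OF 1, of "- y" u v] linear_eq_solve[OF 1, of "- z" u w] that 1
      by (intro exI[of _ "u / x"]) (simp add: P lin_form_def smult3_def)
    then show ?thesis
      by (intro exI[of _ "(- y, x, 0)"] exI[of _ "(- z, 0, x)"]) (auto simp: P lin_form_def)
  next
    case 2
    have "\<exists>c. (u, v, w) = smult3 c P"
      if "lin_form (y, - x, 0) (u, v, w) = 0" "lin_form (0, - z, y) (u, v, w) = 0" for u v w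
      using linear_eq_solve[OF 2, of "- x" v u] linear_eq_solve[OF 2, of "- z" v w] that 2
      by (intro exI[of _ "v / y"]) (simp add: P lin_form_def smult3_def algebra_simps)
    then show ?thesis
      by (intro exI[of _ "(y, - x, 0)"] exI[of _ "(0, - z, y)"]) (auto simp: P lin_form_def)
  next
    case 3
    have "\<exists>c. (u, v, w) = smult3 c P"
      if "lin_form (z, 0, - x) (u, v, w) = 0" "lin_form (0, z, - y) (u, v, w) = 0" for u v w
      using linear_eq_solve[OF 3, of "- x" w u] linear_eq_solve[OF 3, of "- y" w v] that 3
      by (intro exI[of _ "w / z"]) (simp add: P lin_form_def smult3_def algebra_simps)
    then show ?thesis
      by (intro exI[of _ "(z, 0, - x)"] exI[of _ "(0, z, - y)"]) (auto simp: P lin_form_def)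
  qed
qed

lemma anisotropic_quadratic_eq_0_iff:
  fixes u v :: "'b::field"
  assumes r: "\<And>s. s * s + r1 * s + r0 \<noteq> 0"
  shows "u * u + r1 * (u * v) + r0 * (v * v) = 0 \<longleftrightarrow> u = 0 \<and> v = 0"
proof (cases "v = 0")
  case False
  have "u * u + r1 * (u * v) + r0 * (v * v) = (v * v) * ((u / v) * (u / v) + r1 * (u / v) + r0)"
    using False by (simp add: field_simps)
  then show ?thesis
    using False r[of "u / v"] by simp
qed simp

text \<open>An anisotropic binary quadratic form evaluated at two linear forms cutting out \<open>P\<close>.\<close>

lemma exists_quadratic_form_vanishing_exactly_at:
  fixes P :: "'b::{finite,field} triple"
  assumes "P \<noteq> (0, 0, 0)"
  shows "\<exists>g::'b pm3. homog 2 g \<and> (\<forall>Q. pm_eval id g Q = 0 \<longleftrightarrow> (\<exists>c. Q = smult3 c P))"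
proof -
  obtain r1 r0 :: 'b where r: "\<And>s. s * s + r1 * s + r0 \<noteq> 0"
    using exists_anisotropic_quadratic by blast
  obtain a b where ab: "lin_form a P = 0" "lin_form b P = 0"
    "\<And>Q. lin_form a Q = 0 \<Longrightarrow> lin_form b Q = 0 \<Longrightarrow> \<exists>c. Q = smult3 c P"
    using point_common_zero_of_lin_forms[OF assms] by blast
  define A where "A = lin_form_pm a"
  define B where "B = lin_form_pm b"
  define g where "g = A * A + Poly_Mapping.single 0 r1 * A * B + Poly_Mapping.single 0 r0 * B * B"
  have hA: "homog 1 A" "homog 1 B"
    unfolding A_def B_def by (rule homog_lin_form_pm)+
  have hc: "homog 0 (Poly_Mapping.single 0 c :: 'b pm3)" for c
    by (rule homog_single) (simp add: tdeg_def)
  have "homog 2 g"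
    unfolding g_def using hA hc
    by (intro homog_add) (metis homog_mult one_add_one add_0)+
  have g_val: "pm_eval id g Q = lin_form a Q * lin_form a Q + r1 * (lin_form a Q * lin_form b Q)
      + r0 * (lin_form b Q * lin_form b Q)" for Q
    unfolding g_def A_def B_def
    by (simp add: pm_eval_add pm_eval_mult[OF is_ring_hom_id] pm_eval_single pm_eval_lin_form_pm
        mono_val_0 mult_ac)
  have "pm_eval id g Q = 0 \<longleftrightarrow> (\<exists>c. Q = smult3 c P)" for Q
  proof -
    have "pm_eval id g Q = 0 \<longleftrightarrow> lin_form a Q = 0 \<and> lin_form b Q = 0"
      using g_val[of Q] anisotropic_quadratic_eq_0_iff[OF r] by simp
    also have "\<dots> \<longleftrightarrow> (\<exists>c. Q = smult3 c P)"
      using ab(1,2) ab(3)[of Q] by (auto simp: lin_form_smult3)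
    finally show ?thesis .
  qed
  with \<open>homog 2 g\<close> show ?thesis
    by blast
qed

lemma emb3_eq_0_iff:
  assumes "\<And>x. f x = 0 \<longleftrightarrow> x = 0"
  shows "emb3 f X = (0, 0, 0) \<longleftrightarrow> X = (0, 0, 0)"
  by (cases X) (simp add: emb3_def assms)

context field_embedding
begin

lemma descend_frobenius_fixed:
  fixes N :: "'b pm3"
  assumes "homog d N" and fixed: "Poly_Mapping.map (\<lambda>x. x ^ card (UNIV :: 'a set)) N = N"
  shows "\<exists>H::'a pm3. homog d H \<and> (\<forall>X. pm_eval emb H X = pm_eval id N X)"
proof -
  have N_range: "poly_mapping.lookup N m \<in> range emb" for m
    using arg_cong[OF fixed, of "\<lambda>p. poly_mapping.lookup p m"]
    by (simp add: lookup_map_zero power_card_eq_self_iff finite_UNIV_card_ge_0)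
  have inv0: "inv emb 0 = 0"
    by (metis inv_f_f ring_hom_inj[OF emb] is_ring_homD(1)[OF emb])
  have "pm_eval emb (Poly_Mapping.map (inv emb) N) X = pm_eval id N X" for X
  proof -
    have "pm_eval emb (Poly_Mapping.map (inv emb) N) X = pm_eval (emb \<circ> inv emb) N X"
      by (rule pm_eval_map) (simp_all add: is_ring_homD[OF emb] inv0)
    also have "\<dots> = pm_eval id N X"
      unfolding pm_eval_def by (intro sum.cong refl) (simp add: f_inv_into_f[OF N_range])
    finally show ?thesis .
  qed
  with \<open>homog d N\<close> show ?thesis
    by (blast intro: homog_map)
qed

text \<open>The norm of a form over \<open>'b\<close>, i.e.\ the product of its Frobenius conjugates, is
  Frobenius invariant and therefore a form over \<open>'a\<close>.\<close>

lemma exists_norm_form: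
  fixes g :: "'b pm3"
  assumes g: "homog \<delta> g" and e: "e > 0" "\<forall>x::'b. x ^ (card (UNIV :: 'a set) ^ e) = x"
  shows "\<exists>H::'a pm3. homog (\<delta> * e) H \<and> (\<forall>X. pm_eval emb H X =
    (\<Prod>k<e. pm_eval id g (emb3 (\<lambda>x. x ^ (card (UNIV :: 'a set) ^ (e - k))) X) ^ (card (UNIV :: 'a set) ^ k)))"
proof -
  define \<sigma> where "\<sigma> k x = (x::'b) ^ (card (UNIV :: 'a set) ^ k)" for k x
  have \<sigma>_hom: "is_ring_hom (\<sigma> k)" for k
    unfolding \<sigma>_def by (rule frobenius_is_ring_hom)
  have \<sigma>_0: "\<sigma> 0 = (\<lambda>x. x)"
    by (simp add: \<sigma>_def fun_eq_iff)
  have \<sigma>_e: "\<sigma> e = (\<lambda>x. x)"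
    using e unfolding \<sigma>_def by auto
  have \<sigma>_add: "\<sigma> a \<circ> \<sigma> b = \<sigma> (a + b)" for a b
    unfolding \<sigma>_def by (auto simp flip: power_mult simp: power_add mult.commute)
  define N where "N = (\<Prod>k<e. Poly_Mapping.map (\<sigma> k) g)"
  have "homog (\<delta> * card {..<e}) N"
    unfolding N_def by (intro homog_prod homog_map g) auto
  hence hN: "homog (\<delta> * e) N"
    by simp
  have conj_shift: "Poly_Mapping.map (\<sigma> 1) (Poly_Mapping.map (\<sigma> k) g) = Poly_Mapping.map (\<sigma> (Suc k)) g" for k
    using \<sigma>_add[of 1 k] by (simp add: map_map_zero is_ring_homD[OF \<sigma>_hom])
  have "Poly_Mapping.map (\<sigma> 1) N = N"
  proof -
    obtain n where n: "e = Suc n"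
      using e(1) by (cases e) auto
    have "Poly_Mapping.map (\<sigma> 1) N = (\<Prod>k<e. Poly_Mapping.map (\<sigma> (Suc k)) g)"
      unfolding N_def by (simp only: map_prod_ring_hom[OF \<sigma>_hom] conj_shift)
    also have "\<dots> = (\<Prod>k<n. Poly_Mapping.map (\<sigma> (Suc k)) g) * g"
      using \<sigma>_e by (simp add: n map_ident)
    also have "\<dots> = N"
      unfolding N_def n prod.lessThan_Suc_shift by (simp add: \<sigma>_0 map_ident mult.commute)
    finally show ?thesis .
  qed
  moreover have "\<sigma> 1 = (\<lambda>x. x ^ card (UNIV :: 'a set))"
    by (simp add: \<sigma>_def fun_eq_iff)
  ultimately obtain H :: "'a pm3" where H: "homog (\<delta> * e) H" "\<And>X. pm_eval emb H X = pm_eval id N X"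
    using descend_frobenius_fixed[OF hN] by metis
  have "pm_eval id N X = (\<Prod>k<e. \<sigma> k (pm_eval id g (emb3 (\<sigma> (e - k)) X)))" for X
    unfolding N_def pm_eval_prod[OF is_ring_hom_id]
  proof (intro prod.cong refl)
    fix k assume "k \<in> {..<e}"
    hence "emb3 (\<sigma> k) (emb3 (\<sigma> (e - k)) X) = X"
      using fun_cong[OF \<sigma>_add[of k "e - k"]] by (cases X) (simp add: emb3_def \<sigma>_e)
    thus "pm_eval id (Poly_Mapping.map (\<sigma> k) g) X = \<sigma> k (pm_eval id g (emb3 (\<sigma> (e - k)) X))"
      by (simp add: pm_eval_map is_ring_homD[OF \<sigma>_hom] ring_hom_pm_eval[OF \<sigma>_hom])
  qed
  with H show ?thesis
    unfolding \<sigma>_def by auto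
qed

lemma exists_form_separating_points:
  assumes P: "P \<noteq> (0, 0, 0)" and P': "P' \<noteq> (0, 0, 0)"
    and not_conj: "\<not> same_closed_pt (card (UNIV :: 'a set)) P' P"
  shows "\<exists>\<delta> (H::'a pm3). homog \<delta> H \<and> pm_eval emb H P = 0 \<and> pm_eval emb H P' \<noteq> 0"
proof -
  let ?q = "card (UNIV :: 'a set)"
  have "?q > 0"
    by (simp add: finite_UNIV_card_ge_0)
  obtain e where e: "e > 0" "\<forall>x::'b. x ^ (?q ^ e) = x"
    using frobenius_periodic by blast
  obtain g where g: "homog 2 g" "\<And>Q. pm_eval id g Q = 0 \<longleftrightarrow> (\<exists>c. Q = smult3 c P)"
    using exists_quadratic_form_vanishing_exactly_at[OF P] by blast
  obtain H :: "'a pm3" where H: "homog (2 * e) H"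
    "\<And>X. pm_eval emb H X = (\<Prod>k<e. pm_eval id g (emb3 (\<lambda>x. x ^ (?q ^ (e - k))) X) ^ (?q ^ k))"
    using exists_norm_form[OF g(1) e] by blast
  have "pm_eval id g P = 0"
    using g(2)[of P] by (cases P) (auto simp: smult3_def intro: exI[of _ 1])
  moreover have "emb3 (\<lambda>x. x ^ (?q ^ e)) P = P"
    using e(2) by (cases P) (simp add: emb3_def)
  ultimately have "pm_eval emb H P = 0"
    unfolding H(2) using e(1) \<open>?q > 0\<close> by (auto intro!: bexI[of _ 0])
  moreover have "pm_eval emb H P' \<noteq> 0"
  proof
    assume "pm_eval emb H P' = 0"
    then obtain k where "pm_eval id g (emb3 (\<lambda>x. x ^ (?q ^ (e - k))) P') = 0"
      unfolding H(2) by (auto simp: finite_UNIV_card_ge_0)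
    then obtain c where c: "emb3 (\<lambda>x. x ^ (?q ^ (e - k))) P' = smult3 c P"
      using g(2) by blast
    moreover have "emb3 (\<lambda>x. x ^ (?q ^ (e - k))) P' \<noteq> (0, 0, 0)"
      using P' by (subst emb3_eq_0_iff) (auto simp: finite_UNIV_card_ge_0)
    ultimately have "c \<noteq> 0"
      by (cases P) (auto simp: smult3_def)
    with c have "same_closed_pt ?q P' P"
      unfolding same_closed_pt_def
      by (cases P; cases P') (auto simp: emb3_def smult3_def intro!: exI[of _ "e - k"] exI[of _ "inverse c"])
    with not_conj show False
      by contradiction
  qed
  ultimately show ?thesis
    using H(1) by blast
qed

lemma exists_form_isolating_point:
  assumes P: "P \<noteq> (0, 0, 0)" and "finite Z"
    and Z: "\<And>P'. P' \<in> Z \<Longrightarrow> P' \<noteq> (0, 0, 0) \<and> \<not> same_closed_pt (card (UNIV :: 'a set)) P P'"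
  shows "\<exists>\<delta> (h::'a pm3). homog \<delta> h \<and> pm_eval emb h P \<noteq> 0 \<and> (\<forall>P'\<in>Z. pm_eval emb h P' = 0)"
  using \<open>finite Z\<close> Z
proof (induction Z rule: finite_induct)
  case empty
  show ?case
    by (intro exI[of _ 0] exI[of _ "1 :: 'a pm3"]) (simp add: homog_1 pm_eval_1[OF emb])
next
  case (insert P' Z)
  obtain \<delta> h where h: "homog \<delta> h" "pm_eval emb h P \<noteq> 0" "\<forall>P''\<in>Z. pm_eval emb h P'' = 0"
    using insert by blast
  obtain \<delta>' H where H: "homog \<delta>' H" "pm_eval emb H P' = 0" "pm_eval emb H P \<noteq> 0"
    using exists_form_separating_points[OF _ P] insert.prems[of P'] by blast
  show ?case
    using h H by (intro exI[of _ "\<delta> + \<delta>'"] exI[of _ "h * H"])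
      (auto simp: homog_mult pm_eval_mult[OF emb])
qed

end

section \<open>First-order jets\<close>

text \<open>\<open>jet_mult\<close> is the multiplication of dual numbers, making \<open>jet1\<close> a ring homomorphism.\<close>

definition jet1 :: "'b::comm_ring_1 poly \<Rightarrow> 'b \<times> 'b" where
  "jet1 r = (coeff r 0, coeff r 1)"

definition jet_mult :: "'b::comm_ring_1 \<times> 'b \<Rightarrow> 'b \<times> 'b \<Rightarrow> 'b \<times> 'b" where
  "jet_mult a b = (fst a * fst b, fst a * snd b + snd a * fst b)"

lemma jet_mult_0 [simp]: "jet_mult (0, 0) a = 0"
  by (simp add: jet_mult_def zero_prod_def)

lemma jet_mult_1 [simp]: "jet_mult (1, 0) a = a"
  by (simp add: jet_mult_def)

lemma jet1_add: "jet1 (r + s) = jet1 r + jet1 s"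
  by (simp add: jet1_def)

lemma jet1_0 [simp]: "jet1 0 = 0"
  by (simp add: jet1_def zero_prod_def)

lemma jet1_sum: "jet1 (\<Sum>i\<in>I. r i) = (\<Sum>i\<in>I. jet1 (r i))"
  by (induction I rule: infinite_finite_induct) (simp_all add: jet1_add)

lemma jet1_mult: "jet1 (r * s) = jet_mult (jet1 r) (jet1 s)"
proof -
  have "{..Suc 0} = {0, Suc 0}"
    by auto
  thus ?thesis
    by (simp add: jet1_def jet_mult_def coeff_mult)
qed

lemma jet1_smult: "jet1 (smult c r) = (c * fst (jet1 r), c * snd (jet1 r))"
  by (simp add: jet1_def)

lemma jet1_linear: "jet1 [:a, b:] = (a, b)"
  by (simp add: jet1_def)

lemma jet1_power: "jet1 (r ^ n) = (fst (jet1 r) ^ n, of_nat n * fst (jet1 r) ^ (n - 1) * snd (jet1 r))"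
proof (induction n)
  case (Suc n)
  show ?case
  proof (cases n)
    case 0
    then show ?thesis
      by (simp add: jet1_def)
  next
    case (Suc n')
    then show ?thesis
      using Suc.IH by (simp add: jet1_mult jet_mult_def algebra_simps)
  qed
qed (simp add: jet1_def)

lemma X_squared_dvd_iff_jet1: "[:0, 1:] ^ 2 dvd (r :: 'b::comm_ring_1 poly) \<longleftrightarrow> jet1 r = (0, 0)"
proof
  assume "[:0, 1:] ^ 2 dvd r"
  then obtain s where "r = [:0, 1:] ^ 2 * s"
    by (elim dvdE)
  moreover have "[:0, 1:] ^ 2 * s = pCons 0 (pCons 0 s)"
    by (simp add: power2_eq_square)
  ultimately show "jet1 r = (0, 0)"
    by (simp add: jet1_def)
next
  assume "jet1 r = (0, 0)"
  moreover obtain a b s where "r = pCons a (pCons b s)"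
    by (metis pCons_cases)
  ultimately have "r = [:0, 1:] ^ 2 * s"
    by (simp add: jet1_def power2_eq_square)
  thus "[:0, 1:] ^ 2 dvd r"
    by simp
qed

definition line_param :: "'b::comm_ring_1 triple \<Rightarrow> 'b triple \<Rightarrow> 'b poly triple" where
  "line_param P w = (case P of (p1, p2, p3) \<Rightarrow> case w of (w1, w2, w3) \<Rightarrow>
     ([:p1, w1:], [:p2, w2:], [:p3, w3:]))"

lemma fst_jet1_mono_val_line: "fst (jet1 (mono_val m (line_param P w))) = mono_val m P"
  by (cases m; cases P; cases w) (simp add: line_param_def jet1_mult jet1_power jet1_linear jet_mult_def)

lemma snd_jet1_mono_val_line:
  "snd (jet1 (mono_val m (line_param (p1, p2, p3) (w1, w2, w3)))) =
     w1 * (of_nat (fst m) * mono_val (m - (1, 0, 0)) (p1, p2, p3))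
   + w2 * (of_nat (fst (snd m)) * mono_val (m - (0, 1, 0)) (p1, p2, p3))
   + w3 * (of_nat (snd (snd m)) * mono_val (m - (0, 0, 1)) (p1, p2, p3))"
  by (cases m) (simp add: line_param_def jet1_mult jet1_power jet1_linear jet_mult_def algebra_simps)

definition jet :: "('a::zero \<Rightarrow> 'b::field) \<Rightarrow> 'b triple \<Rightarrow> 'a poly3 \<Rightarrow> 'b triple \<Rightarrow> 'b \<times> 'b" where
  "jet emb P f w = jet1 (restr emb f P w)"

lemma restr_as_sum:
  "restr emb f P w = (\<Sum>m\<in>supp3 f. smult (emb (f m)) (mono_val m (line_param P w)))"
  by (cases P; cases w) (auto simp: restr_def line_param_def intro!: sum.cong split: prod.splits)

lemma jet_as_sum: "jet emb P f w = (\<Sum>m\<in>supp3 f.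
    (emb (f m) * fst (jet1 (mono_val m (line_param P w))), emb (f m) * snd (jet1 (mono_val m (line_param P w)))))"
  unfolding jet_def restr_as_sum jet1_sum jet1_smult ..

lemma eval3_as_sum: "eval3 \<phi> f X = (\<Sum>m\<in>supp3 f. \<phi> (f m) * mono_val m X)"
  by (cases X) (auto simp: eval3_def intro!: sum.cong split: prod.splits)

lemma eval3_superset:
  assumes "\<phi> 0 = 0" "finite S" "supp3 f \<subseteq> S"
  shows "eval3 \<phi> f X = (\<Sum>m\<in>S. \<phi> (f m) * mono_val m X)"
  unfolding eval3_as_sum by (rule sum.mono_neutral_left) (use assms in \<open>auto simp: supp3_def\<close>)

lemma ring_hom_eval3:
  assumes "is_ring_hom emb"
  shows "emb (eval3 id f Q) = eval3 emb f (emb3 emb Q)"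
  unfolding eval3_as_sum by (simp add: ring_hom_sum[OF assms] is_ring_homD[OF assms] ring_hom_mono_val[OF assms])

lemma fst_jet: "fst (jet emb P f w) = eval3 emb f P"
  by (simp add: jet_as_sum fst_sum fst_jet1_mono_val_line eval3_as_sum)

lemma eval3_shift:
  assumes hom: "is_ring_hom \<phi>" and fin: "finite (supp3 f)"
    and shift: "\<And>m. m + u - u = m" "\<And>m. c m \<noteq> 0 \<Longrightarrow> m - u + u = m" "\<And>m. c (m + u) = Suc (c m)"
  shows "eval3 \<phi> (\<lambda>m. of_nat (c (m + u)) * f (m + u)) X =
    (\<Sum>m\<in>supp3 f. \<phi> (f m) * (of_nat (c m) * mono_val (m - u) X))"
proof -
  let ?D = "\<lambda>m. of_nat (c (m + u)) * f (m + u)"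
  let ?S = "{m \<in> supp3 f. c m \<noteq> 0}"
  have sub: "supp3 ?D \<subseteq> (\<lambda>m. m - u) ` ?S"
  proof
    fix m assume "m \<in> supp3 ?D"
    hence "m + u \<in> ?S"
      using shift(3) by (auto simp: supp3_def)
    thus "m \<in> (\<lambda>m. m - u) ` ?S"
      by (rule image_eqI[rotated]) (simp add: shift(1))
  qed
  have inj: "inj_on (\<lambda>m. m - u) ?S"
  proof (rule inj_onI)
    fix m m' assume "m \<in> ?S" "m' \<in> ?S" "m - u = m' - u"
    have "m = m - u + u"
      using shift(2) \<open>m \<in> ?S\<close> by simp
    also have "\<dots> = m' - u + u"
      using \<open>m - u = m' - u\<close> by simp
    also have "\<dots> = m'"
      using shift(2) \<open>m' \<in> ?S\<close> by simp
    finally show "m = m'" .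
  qed
  have "eval3 \<phi> ?D X = (\<Sum>m\<in>(\<lambda>m. m - u) ` ?S. \<phi> (?D m) * mono_val m X)"
    by (rule eval3_superset) (use hom fin sub in \<open>auto simp: is_ring_homD\<close>)
  also have "\<dots> = (\<Sum>m\<in>?S. \<phi> (?D (m - u)) * mono_val (m - u) X)"
    by (simp only: sum.reindex[OF inj] comp_def)
  also have "\<dots> = (\<Sum>m\<in>?S. \<phi> (f m) * (of_nat (c m) * mono_val (m - u) X))"
    by (intro sum.cong refl) (auto simp: shift(2) is_ring_homD[OF hom] ring_hom_of_nat[OF hom] mult_ac)
  also have "\<dots> = (\<Sum>m\<in>supp3 f. \<phi> (f m) * (of_nat (c m) * mono_val (m - u) X))"
    by (rule sum.mono_neutral_left) (use fin in auto)
  finally show ?thesis .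
qed

lemma eval3_dx:
  assumes "is_ring_hom \<phi>" "finite (supp3 f)"
  shows "eval3 \<phi> (dx f) X = (\<Sum>m\<in>supp3 f. \<phi> (f m) * (of_nat (fst m) * mono_val (m - (1, 0, 0)) X))"
proof -
  have "dx f = (\<lambda>m. of_nat (fst (m + (1, 0, 0))) * f (m + (1, 0, 0)))"
    by (auto simp: dx_def fun_eq_iff)
  moreover have "eval3 \<phi> (\<lambda>m. of_nat (fst (m + (1, 0, 0))) * f (m + (1, 0, 0))) X =
      (\<Sum>m\<in>supp3 f. \<phi> (f m) * (of_nat (fst m) * mono_val (m - (1, 0, 0)) X))"
    by (rule eval3_shift[OF assms, where c = "fst"]) (simp_all add: split_paired_all)
  ultimately show ?thesis
    by simp
qed

lemma eval3_dy:
  assumes "is_ring_hom \<phi>" "finite (supp3 f)"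
  shows "eval3 \<phi> (dy f) X = (\<Sum>m\<in>supp3 f. \<phi> (f m) * (of_nat (fst (snd m)) * mono_val (m - (0, 1, 0)) X))"
proof -
  have "dy f = (\<lambda>m. of_nat (fst (snd (m + (0, 1, 0)))) * f (m + (0, 1, 0)))"
    by (auto simp: dy_def fun_eq_iff)
  moreover have "eval3 \<phi> (\<lambda>m. of_nat (fst (snd (m + (0, 1, 0)))) * f (m + (0, 1, 0))) X =
      (\<Sum>m\<in>supp3 f. \<phi> (f m) * (of_nat (fst (snd m)) * mono_val (m - (0, 1, 0)) X))"
    by (rule eval3_shift[OF assms, where c = "\<lambda>m. fst (snd m)"]) (simp_all add: split_paired_all)
  ultimately show ?thesis
    by simp
qed

lemma eval3_dz:
  assumes "is_ring_hom \<phi>" "finite (supp3 f)"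
  shows "eval3 \<phi> (dz f) X = (\<Sum>m\<in>supp3 f. \<phi> (f m) * (of_nat (snd (snd m)) * mono_val (m - (0, 0, 1)) X))"
proof -
  have "dz f = (\<lambda>m. of_nat (snd (snd (m + (0, 0, 1)))) * f (m + (0, 0, 1)))"
    by (auto simp: dz_def fun_eq_iff)
  moreover have "eval3 \<phi> (\<lambda>m. of_nat (snd (snd (m + (0, 0, 1)))) * f (m + (0, 0, 1))) X =
      (\<Sum>m\<in>supp3 f. \<phi> (f m) * (of_nat (snd (snd m)) * mono_val (m - (0, 0, 1)) X))"
    by (rule eval3_shift[OF assms, where c = "\<lambda>m. snd (snd m)"]) (simp_all add: split_paired_all)
  ultimately show ?thesis
    by simp
qed

lemma snd_jet:
  assumes "is_ring_hom emb" "finite (supp3 f)"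
  shows "snd (jet emb (p1, p2, p3) f (w1, w2, w3)) = w1 * eval3 emb (dx f) (p1, p2, p3)
    + w2 * eval3 emb (dy f) (p1, p2, p3) + w3 * eval3 emb (dz f) (p1, p2, p3)"
proof -
  let ?P = "(p1, p2, p3)"
  have "snd (jet emb ?P f (w1, w2, w3)) =
      (\<Sum>m\<in>supp3 f. w1 * (emb (f m) * (of_nat (fst m) * mono_val (m - (1, 0, 0)) ?P))
        + w2 * (emb (f m) * (of_nat (fst (snd m)) * mono_val (m - (0, 1, 0)) ?P))
        + w3 * (emb (f m) * (of_nat (snd (snd m)) * mono_val (m - (0, 0, 1)) ?P)))"
    unfolding jet_as_sum snd_sum snd_conv snd_jet1_mono_val_line
    by (intro sum.cong refl) (simp only: distrib_left mult.left_commute)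
  also have "\<dots> = w1 * eval3 emb (dx f) ?P + w2 * eval3 emb (dy f) ?P + w3 * eval3 emb (dz f) ?P"
    unfolding eval3_dx[OF assms] eval3_dy[OF assms] eval3_dz[OF assms]
    by (simp only: sum.distrib sum_distrib_left)
  finally show ?thesis .
qed

lemma tangent_at_jet_cong:
  "jet emb P f = jet emb P g \<Longrightarrow> tangent_at emb f L P \<longleftrightarrow> tangent_at emb g L P"
  unfolding tangent_at_def X_squared_dvd_iff_jet1 by (metis jet_def)

lemma singular_at_iff_jet:
  fixes emb :: "'a::field \<Rightarrow> 'b::field"
  assumes emb: "is_ring_hom emb" and fin: "finite (supp3 f)"
  shows "singular_at f Q \<longleftrightarrow> fst (jet emb (emb3 emb Q) f (1, 0, 0)) = 0 \<and>
    snd (jet emb (emb3 emb Q) f (1, 0, 0)) = 0 \<and> snd (jet emb (emb3 emb Q) f (0, 1, 0)) = 0 \<and>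
    snd (jet emb (emb3 emb Q) f (0, 0, 1)) = 0"
proof -
  obtain p1 p2 p3 where P: "emb3 emb Q = (p1, p2, p3)"
    by (cases "emb3 emb Q")
  have "eval3 id h Q = 0 \<longleftrightarrow> eval3 emb h (emb3 emb Q) = 0" for h
    using ring_hom_eval3[OF emb, of h Q] ring_hom_eq_0_iff[OF emb] by metis
  thus ?thesis
    unfolding singular_at_def fst_jet P snd_jet[OF emb fin] by simp
qed

lemma singular_at_jet_cong:
  fixes emb :: "'a::field \<Rightarrow> 'b::field"
  assumes "is_ring_hom emb" "finite (supp3 f)" "finite (supp3 g)"
    and "jet emb (emb3 emb Q) f = jet emb (emb3 emb Q) g"
  shows "singular_at f Q \<longleftrightarrow> singular_at g Q"
  using singular_at_iff_jet[OF assms(1,2)] singular_at_iff_jet[OF assms(1,3)] assms(4) by simp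

lemma Rdeg_subset_Rhomog: "d \<ge> 1 \<Longrightarrow> Rdeg d \<subseteq> Rhomog"
  unfolding Rhomog_def by auto

lemma finite_supp3_Rdeg:
  assumes "f \<in> Rdeg d"
  shows "finite (supp3 f)"
proof -
  have "supp3 f \<subseteq> {..d} \<times> {..d} \<times> {..d}"
    using assms unfolding Rdeg_def supp3_def by fastforce
  thus ?thesis
    by (rule finite_subset) simp
qed

lemma lookup_Rdeg: "homog d p \<Longrightarrow> poly_mapping.lookup p \<in> Rdeg d"
  unfolding Rdeg_def homog_def tdeg_def by (force simp: in_keys_iff)

lemma cond_set_jet_cong:
  fixes emb :: "'a::field \<Rightarrow> 'b::field"
  assumes emb: "is_ring_hom emb" and "d \<ge> 1" "f \<in> Rdeg d" "g \<in> Rdeg d"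
    and J: "jet emb (cond_pt emb C) f = jet emb (cond_pt emb C) g"
  shows "f \<in> cond_set emb C \<longleftrightarrow> g \<in> cond_set emb C"
proof -
  have "f \<in> Rhomog" "g \<in> Rhomog"
    using Rdeg_subset_Rhomog assms(2-4) by auto
  moreover have "singular_at f Q \<longleftrightarrow> singular_at g Q" if "cond_pt emb C = emb3 emb Q" for Q
    using singular_at_jet_cong[OF emb] finite_supp3_Rdeg assms(3,4) J that by metis
  ultimately show ?thesis
    using J tangent_at_jet_cong[OF J]
    by (cases C) (simp_all add: Tset_def Sset_def A0set_def ALset_def)
qed

lemma dset_jet_cong:
  fixes emb :: "'a::field \<Rightarrow> 'b::field"
  assumes "is_ring_hom emb" "d \<ge> 1" "f \<in> Rdeg d" "g \<in> Rdeg d"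
    and "jet emb (cond_pt emb (snd D)) f = jet emb (cond_pt emb (snd D)) g"
  shows "f \<in> dset emb D \<longleftrightarrow> g \<in> dset emb D"
  using cond_set_jet_cong[OF assms] Rdeg_subset_Rhomog[OF assms(2)] assms(3,4)
  unfolding dset_def by auto

section \<open>Killing jets at the other points in large degree\<close>

definition const_poly :: "('a \<Rightarrow> 'b::comm_ring_1) \<Rightarrow> 'a \<Rightarrow> 'b poly" where
  "const_poly emb a = [:emb a:]"

lemma is_ring_hom_const_poly: "is_ring_hom emb \<Longrightarrow> is_ring_hom (const_poly emb)"
  unfolding is_ring_hom_def const_poly_def by simp

lemma supp3_lookup: "supp3 (poly_mapping.lookup p) = Poly_Mapping.keys p"
  by (simp add: supp3_def in_keys_iff set_eq_iff)

lemma eval3_lookup: "eval3 \<phi> (poly_mapping.lookup p) X = pm_eval \<phi> p X"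
  by (simp add: eval3_as_sum supp3_lookup pm_eval_def)

lemma jet_lookup:
  "jet emb P (poly_mapping.lookup p) w = jet1 (pm_eval (const_poly emb) p (line_param P w))"
  by (simp add: jet_def restr_as_sum supp3_lookup pm_eval_def const_poly_def)

lemma jet_lookup_zero [simp]: "jet emb P (poly_mapping.lookup 0) w = 0"
  by (simp add: jet_lookup)

context
  fixes emb :: "'a::field \<Rightarrow> 'b::field"
  assumes emb: "is_ring_hom emb"
begin

lemma jet_lookup_add: "jet emb P (poly_mapping.lookup (p + q)) w =
    jet emb P (poly_mapping.lookup p) w + jet emb P (poly_mapping.lookup q) w"
  using is_ring_homD[OF is_ring_hom_const_poly[OF emb]]
  by (simp add: jet_lookup pm_eval_add jet1_add)

lemma jet_lookup_sum:
  "jet emb P (poly_mapping.lookup (\<Sum>i\<in>I. p i)) w = (\<Sum>i\<in>I. jet emb P (poly_mapping.lookup (p i)) w)"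
  using is_ring_homD[OF is_ring_hom_const_poly[OF emb]]
  by (simp add: jet_lookup pm_eval_sum jet1_sum)

lemma jet_lookup_mult: "jet emb P (poly_mapping.lookup (p * q)) w =
    jet_mult (jet emb P (poly_mapping.lookup p) w) (jet emb P (poly_mapping.lookup q) w)"
  by (simp add: jet_lookup pm_eval_mult[OF is_ring_hom_const_poly[OF emb]] jet1_mult)

lemma jet_lookup_const: "jet emb P (poly_mapping.lookup (Poly_Mapping.single 0 c)) w = (emb c, 0)"
  using is_ring_homD[OF is_ring_hom_const_poly[OF emb]]
  by (simp add: jet_lookup pm_eval_single const_poly_def mono_val_0 jet1_def)

lemma jet_lookup_power_char:
  assumes "of_nat M = (0::'b)"
  shows "jet emb P (poly_mapping.lookup (p ^ M)) w = (pm_eval emb p P ^ M, 0)"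
proof -
  have "fst (jet1 (pm_eval (const_poly emb) p (line_param P w))) = pm_eval emb p P"
    using fst_jet[of emb P "poly_mapping.lookup p" w] by (simp add: jet_lookup eval3_lookup)
  thus ?thesis
    using assms by (simp add: jet_lookup pm_eval_power[OF is_ring_hom_const_poly[OF emb]] jet1_power)
qed

end

text \<open>The last branch is only meaningful when \<open>tdeg m \<ge> 3 * B\<close>, which forces some exponent of
  \<open>m\<close> to be at least \<open>B\<close>.\<close>

definition coord_power :: "nat \<Rightarrow> nat \<times> nat \<times> nat \<Rightarrow> nat \<times> nat \<times> nat" where
  "coord_power B m =
     (if B \<le> fst m then (B, 0, 0) else if B \<le> fst (snd m) then (0, B, 0) else (0, 0, B))"

lemma coord_power_split:
  assumes "3 * B \<le> tdeg m"
  shows "coord_power B m + (m - coord_power B m) = m" "tdeg (m - coord_power B m) = tdeg m - B"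
  using assms by (cases m; auto simp: coord_power_def tdeg_def)+

lemma jet_lookup_coord_power:
  fixes emb :: "'a::field \<Rightarrow> 'b::field"
  assumes "is_ring_hom emb" "of_nat B = (0::'b)"
  shows "jet emb P (poly_mapping.lookup (Poly_Mapping.single (coord_power B m) 1)) w =
    (mono_val (coord_power B m) P, 0)"
  using assms
  by (cases P; cases w)
    (simp add: jet_lookup pm_eval_single const_poly_def is_ring_homD coord_power_def line_param_def
      jet1_power jet1_linear)

lemma mono_val_coord_power:
  fixes P :: "'b::field triple"
  assumes "\<forall>x::'b. x \<noteq> 0 \<longrightarrow> x ^ B = 1"
  shows "mono_val (coord_power B m) P \<in> {0, 1}"
proof -
  have pow: "x ^ B \<in> {0, 1}" for x :: 'b
    using assms by (cases "x = 0") (auto simp: power_0_left)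
  obtain a b c where "P = (a, b, c)"
    by (cases P)
  thus ?thesis
    using pow[of a] pow[of b] pow[of c] by (auto simp: coord_power_def)
qed

context
  fixes emb :: "'a::field \<Rightarrow> 'b::field" and h :: "'a pm3" and M B :: nat
  assumes emb: "is_ring_hom emb" and M: "of_nat M = (0::'b)"
    and B: "of_nat B = (0::'b)" "\<forall>x::'b. x \<noteq> 0 \<longrightarrow> x ^ B = 1"
begin

text \<open>The pure power \<open>x\<^sub>i\<^sup>B\<close> dividing the monomial is replaced by \<open>h\<^sup>M\<close>. Both have
  vanishing derivative and take the value \<open>1\<close> at \<open>P\<close>, unless \<open>x\<^sub>i\<close> vanishes at \<open>P\<close>, in which
  case the jet of the monomial at \<open>P\<close> is zero and the monomial is dropped.\<close>

definition transfer_monomial :: "'b triple \<Rightarrow> nat \<times> nat \<times> nat \<Rightarrow> 'a pm3" where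
  "transfer_monomial P m = (if mono_val (coord_power B m) P \<noteq> 0
     then h ^ M * Poly_Mapping.single (m - coord_power B m) 1 else 0)"

lemma jet_transfer_monomial:
  assumes "3 * B \<le> tdeg m" "pm_eval emb h P ^ M = 1"
  shows "jet emb P (poly_mapping.lookup (transfer_monomial P m)) w =
    jet emb P (poly_mapping.lookup (Poly_Mapping.single m 1)) w"
proof -
  let ?v = "coord_power B m"
  have "Poly_Mapping.single m (1::'a) = Poly_Mapping.single ?v 1 * Poly_Mapping.single (m - ?v) 1"
    using coord_power_split(1)[OF assms(1)] by (simp add: mult_single)
  hence mono: "jet emb P (poly_mapping.lookup (Poly_Mapping.single m 1)) w =
      jet_mult (mono_val ?v P, 0) (jet emb P (poly_mapping.lookup (Poly_Mapping.single (m - ?v) 1)) w)"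
    by (simp add: jet_lookup_mult[OF emb] jet_lookup_coord_power[OF emb B(1)])
  show ?thesis
    using mono_val_coord_power[OF B(2), of m P] assms(2)
    by (auto simp: transfer_monomial_def mono jet_lookup_mult[OF emb] jet_lookup_power_char[OF emb M])
qed

lemma jet_transfer_monomial_vanishing:
  assumes "M > 0" "pm_eval emb h Q = 0"
  shows "jet emb Q (poly_mapping.lookup (transfer_monomial P m)) w = 0"
  using assms
  by (simp add: transfer_monomial_def jet_lookup_mult[OF emb] jet_lookup_power_char[OF emb M] zero_power)

lemma exists_jet_transfer:
  assumes "M > 0" "homog B (h ^ M)" "pm_eval emb h P ^ M = 1" "\<forall>Q\<in>Z. pm_eval emb h Q = 0"
    and "3 * B \<le> d" "f \<in> Rdeg d"
  shows "\<exists>g\<in>Rdeg d. jet emb P g = jet emb P f \<and> (\<forall>Q\<in>Z. jet emb Q g = 0)"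
proof -
  have fin: "finite (supp3 f)"
    using finite_supp3_Rdeg[OF assms(6)] .
  have tdeg: "tdeg m = d" if "m \<in> supp3 f" for m
    using that assms(6) unfolding Rdeg_def supp3_def tdeg_def by (cases m) auto
  define g where "g = (\<Sum>m\<in>supp3 f. Poly_Mapping.single 0 (f m) * transfer_monomial P m)"
  have "homog (0 + d) (Poly_Mapping.single 0 (f m) * transfer_monomial P m)" if "m \<in> supp3 f" for m
  proof (intro homog_mult)
    show "homog 0 (Poly_Mapping.single 0 (f m))"
      by (simp add: homog_single tdeg_def)
    have "homog (B + (d - B)) (h ^ M * Poly_Mapping.single (m - coord_power B m) 1)"
      using coord_power_split(2)[of B m] tdeg[OF that] assms(5)
      by (intro homog_mult assms(2) homog_single) auto
    thus "homog d (transfer_monomial P m)"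
      using assms(5) by (simp add: transfer_monomial_def homog_0)
  qed
  hence "homog d g"
    unfolding g_def by (intro homog_sum) simp
  have f_eq: "f = poly_mapping.lookup (\<Sum>m\<in>supp3 f. Poly_Mapping.single 0 (f m) * Poly_Mapping.single m 1)"
    using arg_cong[OF poly_mapping_sum_single[of "supp3 f" "Abs_poly_mapping f"], of poly_mapping.lookup] fin
    by (simp add: mult_single supp3_def keys.abs_eq eq_onp_def)
  have jet_sum: "jet emb Q (poly_mapping.lookup (\<Sum>m\<in>supp3 f. Poly_Mapping.single 0 (f m) * X m)) w =
      (\<Sum>m\<in>supp3 f. jet_mult (emb (f m), 0) (jet emb Q (poly_mapping.lookup (X m)) w))" for Q X w
    by (simp add: jet_lookup_sum[OF emb] jet_lookup_mult[OF emb] jet_lookup_const[OF emb])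
  have "jet emb P (poly_mapping.lookup g) w = jet emb P f w" for w
  proof -
    have "jet emb P (poly_mapping.lookup g) w = (\<Sum>m\<in>supp3 f.
        jet_mult (emb (f m), 0) (jet emb P (poly_mapping.lookup (transfer_monomial P m)) w))"
      unfolding g_def jet_sum ..
    also have "\<dots> = (\<Sum>m\<in>supp3 f.
        jet_mult (emb (f m), 0) (jet emb P (poly_mapping.lookup (Poly_Mapping.single m 1)) w))"
      by (intro sum.cong refl) (simp add: jet_transfer_monomial tdeg assms(3,5))
    also have "\<dots> = jet emb P f w"
      unfolding jet_sum[symmetric] f_eq[symmetric] ..
    finally show ?thesis .
  qed
  moreover have "jet emb Q (poly_mapping.lookup g) w = 0" if "Q \<in> Z" for Q w
    using that assms(1,4) unfolding g_def jet_sum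
    by (simp add: jet_transfer_monomial_vanishing jet_mult_def flip: zero_prod_def)
  ultimately show ?thesis
    using lookup_Rdeg[OF \<open>homog d g\<close>]
    by (intro bexI[of _ "poly_mapping.lookup g"]) (auto simp: fun_eq_iff)
qed

end

text \<open>The exponent \<open>M\<close> is a multiple of the characteristic, so that \<open>h\<^sup>M\<close> has vanishing
  derivative, and of the order of the multiplicative group, so that \<open>h(P)\<^sup>M = 1\<close>.\<close>

lemma eventually_jet_transfer:
  fixes emb :: "'a::field \<Rightarrow> 'b::{finite,field}" and h :: "'a pm3"
  assumes emb: "is_ring_hom emb" and h: "homog \<delta> h" "pm_eval emb h P \<noteq> 0" "\<forall>Q\<in>Z. pm_eval emb h Q = 0"
  shows "\<forall>\<^sub>F d in sequentially. \<forall>f\<in>Rdeg d. \<exists>g\<in>Rdeg d.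
    jet emb P g = jet emb P f \<and> (\<forall>Q\<in>Z. jet emb Q g = 0)"
proof -
  define M where "M = CHAR('b) * (card (UNIV :: 'b set) - 1)"
  have "M > 0"
    using card_finite_field_ge_2[where 'c='b] unfolding M_def by (simp add: finite_imp_CHAR_pos)
  have "of_nat M = (0::'b)"
    by (simp add: M_def)
  have pow_M: "x ^ M = 1" if "x \<noteq> 0" for x :: 'b
    using finite_field_power_card_minus_1[OF that] by (metis M_def mult.commute power_mult power_one)
  have "of_nat (\<delta> * M) = (0::'b)" "\<forall>x::'b. x \<noteq> 0 \<longrightarrow> x ^ (\<delta> * M) = 1"
    using \<open>of_nat M = 0\<close> pow_M by (simp_all add: mult.commute[of \<delta>] power_mult)
  from exists_jet_transfer[OF emb \<open>of_nat M = 0\<close> this \<open>M > 0\<close> homog_power[OF h(1)] pow_M[OF h(2)] h(3)]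
  show ?thesis
    unfolding eventually_sequentially by blast
qed

section \<open>Independence of conditions given by additive maps\<close>

definition add_subgroup :: "'v::ab_group_add set \<Rightarrow> bool" where
  "add_subgroup V \<longleftrightarrow> 0 \<in> V \<and> (\<forall>a\<in>V. \<forall>b\<in>V. a + b \<in> V \<and> a - b \<in> V)"

definition additive_on :: "'v::ab_group_add set \<Rightarrow> ('v \<Rightarrow> 'w::ab_group_add) \<Rightarrow> bool" where
  "additive_on V \<phi> \<longleftrightarrow> (\<forall>a\<in>V. \<forall>b\<in>V. \<phi> (a + b) = \<phi> a + \<phi> b)"

definition determined_by :: "'v set \<Rightarrow> ('v \<Rightarrow> 'w) \<Rightarrow> 'v set \<Rightarrow> bool" where
  "determined_by V \<phi> A \<longleftrightarrow> (\<forall>f\<in>V. \<forall>g\<in>V. \<phi> f = \<phi> g \<longrightarrow> (f \<in> A \<longleftrightarrow> g \<in> A))"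

definition density :: "'v set \<Rightarrow> 'v set \<Rightarrow> real" where
  "density V A = real (card (A \<inter> V)) / real (card V)"

lemma additive_on_diff:
  assumes "add_subgroup V" "additive_on V \<phi>" "a \<in> V" "b \<in> V"
  shows "\<phi> (a - b) = \<phi> a - \<phi> b"
proof -
  have "\<phi> (a - b + b) = \<phi> (a - b) + \<phi> b"
    using assms unfolding add_subgroup_def additive_on_def by blast
  thus ?thesis
    by (simp add: eq_diff_eq)
qed

lemma card_determined:
  assumes sub: "add_subgroup V" and fin: "finite V" and hom: "additive_on V \<phi>"
    and det: "determined_by V \<phi> A"
  shows "card (A \<inter> V) = card (\<phi> ` (A \<inter> V)) * card {k\<in>V. \<phi> k = 0}"
proof -
  let ?K = "{k\<in>V. \<phi> k = 0}"
  let ?F = "\<lambda>y. {f\<in>V. \<phi> f = y}"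
  have "A \<inter> V = (\<Union>y\<in>\<phi> ` (A \<inter> V). ?F y)"
    using det unfolding determined_by_def by blast
  moreover have "card (\<Union>y\<in>\<phi> ` (A \<inter> V). ?F y) = (\<Sum>y\<in>\<phi> ` (A \<inter> V). card (?F y))"
    by (rule card_UN_disjoint) (use fin in auto)
  ultimately have "card (A \<inter> V) = (\<Sum>y\<in>\<phi> ` (A \<inter> V). card (?F y))"
    by simp
  also have "\<dots> = (\<Sum>y\<in>\<phi> ` (A \<inter> V). card ?K)"
  proof (rule sum.cong[OF refl])
    fix y assume "y \<in> \<phi> ` (A \<inter> V)"
    then obtain a where a: "a \<in> V" "y = \<phi> a"
      by blast
    have "bij_betw (\<lambda>k. a + k) ?K (?F y)"
    proof (rule bij_betw_byWitness[where f' = "\<lambda>f. f - a"])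
      show "(\<lambda>k. a + k) ` ?K \<subseteq> ?F y"
        using sub hom a unfolding add_subgroup_def additive_on_def by auto
      show "(\<lambda>f. f - a) ` ?F y \<subseteq> ?K"
        using sub a additive_on_diff[OF sub hom _ a(1)] unfolding add_subgroup_def by auto
    qed auto
    from bij_betw_same_card[OF this] show "card (?F y) = card ?K"
      by simp
  qed
  finally show ?thesis
    by simp
qed

lemma image_pair_determined:
  assumes "determined_by V \<phi> A" "determined_by V \<psi> B"
    and joint: "\<forall>a\<in>V. \<forall>b\<in>V. \<exists>g\<in>V. \<phi> g = \<phi> a \<and> \<psi> g = \<psi> b"
  shows "(\<lambda>f. (\<phi> f, \<psi> f)) ` (A \<inter> B \<inter> V) = \<phi> ` (A \<inter> V) \<times> \<psi> ` (B \<inter> V)"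
proof
  show "\<phi> ` (A \<inter> V) \<times> \<psi> ` (B \<inter> V) \<subseteq> (\<lambda>f. (\<phi> f, \<psi> f)) ` (A \<inter> B \<inter> V)"
  proof clarify
    fix a b assume "a \<in> A" "a \<in> V" "b \<in> B" "b \<in> V"
    moreover obtain g where "g \<in> V" "\<phi> g = \<phi> a" "\<psi> g = \<psi> b"
      using joint \<open>a \<in> V\<close> \<open>b \<in> V\<close> by blast
    ultimately have "g \<in> A \<inter> B \<inter> V"
      using assms(1,2) unfolding determined_by_def by blast
    thus "(\<phi> a, \<psi> b) \<in> (\<lambda>f. (\<phi> f, \<psi> f)) ` (A \<inter> B \<inter> V)"
      by (rule image_eqI[rotated]) (simp add: \<open>\<phi> g = \<phi> a\<close> \<open>\<psi> g = \<psi> b\<close>)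
  qed
qed auto

text \<open>Count the fibres of \<open>f \<mapsto> (\<phi> f, \<psi> f)\<close>, whose image is a product.\<close>

lemma density_inter_determined:
  fixes \<phi> :: "'v::ab_group_add \<Rightarrow> 'w1::ab_group_add" and \<psi> :: "'v \<Rightarrow> 'w2::ab_group_add"
  assumes sub: "add_subgroup V" and fin: "finite V"
    and hom: "additive_on V \<phi>" "additive_on V \<psi>"
    and det: "determined_by V \<phi> A" "determined_by V \<psi> B"
    and joint: "\<forall>a\<in>V. \<forall>b\<in>V. \<exists>g\<in>V. \<phi> g = \<phi> a \<and> \<psi> g = \<psi> b"
  shows "density V (A \<inter> B) = density V A * density V B"
proof -
  define \<chi> where "\<chi> f = (\<phi> f, \<psi> f)" for f
  have hom_\<chi>: "additive_on V \<chi>"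
    using hom unfolding additive_on_def \<chi>_def by simp
  have det_UNIV: "determined_by V f UNIV" for f :: "'v \<Rightarrow> 'x"
    unfolding determined_by_def by blast
  have det_\<chi>: "determined_by V \<chi> (A \<inter> B)"
    using det unfolding determined_by_def \<chi>_def by blast
  define k where "k = card {k\<in>V. \<chi> k = 0}"
  define k1 where "k1 = card {k\<in>V. \<phi> k = 0}"
  define k2 where "k2 = card {k\<in>V. \<psi> k = 0}"
  define s where "s = card (\<phi> ` V)"
  define t where "t = card (\<psi> ` V)"
  have AB: "card (A \<inter> B \<inter> V) = card (\<phi> ` (A \<inter> V)) * card (\<psi> ` (B \<inter> V)) * k"
    using card_determined[OF sub fin hom_\<chi> det_\<chi>] image_pair_determined[OF det joint] fin
    by (simp add: k_def \<chi>_def card_cartesian_product Int_assoc)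
  have V: "card V = s * t * k"
    using card_determined[OF sub fin hom_\<chi> det_UNIV] image_pair_determined[OF det_UNIV det_UNIV joint] fin
    by (simp add: k_def s_def t_def \<chi>_def card_cartesian_product)
  have A: "card (A \<inter> V) = card (\<phi> ` (A \<inter> V)) * k1" "card V = s * k1"
    using card_determined[OF sub fin hom(1) det(1)] card_determined[OF sub fin hom(1) det_UNIV]
    by (simp_all add: k1_def s_def)
  have B: "card (B \<inter> V) = card (\<psi> ` (B \<inter> V)) * k2" "card V = t * k2"
    using card_determined[OF sub fin hom(2) det(2)] card_determined[OF sub fin hom(2) det_UNIV]
    by (simp_all add: k2_def t_def)
  have "s * t > 0"
    using sub fin unfolding s_def t_def add_subgroup_def by (auto simp: card_gt_0_iff)
  moreover have "(k * card V) * (s * t) = card V * card V"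
    by (simp add: V mult_ac)
  moreover have "card V * card V = (k1 * k2) * (s * t)"
    using A(2) B(2) by (simp add: mult_ac)
  ultimately have "k * card V = k1 * k2"
    by simp
  hence "card (A \<inter> B \<inter> V) * card V = card (A \<inter> V) * card (B \<inter> V)"
    by (simp add: AB A(1) B(1) mult_ac)
  hence "real (card (A \<inter> B \<inter> V)) * real (card V) = real (card (A \<inter> V)) * real (card (B \<inter> V))"
    by (metis of_nat_mult)
  moreover have "card V > 0"
    using sub fin unfolding add_subgroup_def by (auto simp: card_gt_0_iff)
  ultimately show ?thesis
    unfolding density_def by (simp add: field_simps)
qed

lemma separated_additive_maps_joint:
  assumes sub: "add_subgroup V" and hom: "\<And>i. i < N \<Longrightarrow> additive_on V (J i)"
    and sep: "\<And>i f. i < N \<Longrightarrow> f \<in> V \<Longrightarrow> \<exists>g\<in>V. J i g = J i f \<and> (\<forall>j<N. j \<noteq> i \<longrightarrow> J j g = 0)"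
    and "n < N" "a \<in> V" "b \<in> V"
  shows "\<exists>g\<in>V. J n g = J n a \<and> (\<forall>i<N. i \<noteq> n \<longrightarrow> J i g = J i b)"
proof -
  obtain g1 where g1: "g1 \<in> V" "J n g1 = J n a" "\<forall>j<N. j \<noteq> n \<longrightarrow> J j g1 = 0"
    using sep[OF \<open>n < N\<close> \<open>a \<in> V\<close>] by blast
  obtain g2 where g2: "g2 \<in> V" "J n g2 = J n b" "\<forall>j<N. j \<noteq> n \<longrightarrow> J j g2 = 0"
    using sep[OF \<open>n < N\<close> \<open>b \<in> V\<close>] by blast
  have "b - g2 \<in> V" "g1 + (b - g2) \<in> V"
    using sub \<open>b \<in> V\<close> g1(1) g2(1) unfolding add_subgroup_def by blast+
  have J_g: "J j (g1 + (b - g2)) = J j g1 + (J j b - J j g2)" if "j < N" for j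
    using hom[OF that] additive_on_diff[OF sub hom[OF that] \<open>b \<in> V\<close> g2(1)] g1(1) \<open>b - g2 \<in> V\<close>
    unfolding additive_on_def by simp
  show ?thesis
    using J_g g1 g2 \<open>n < N\<close> \<open>g1 + (b - g2) \<in> V\<close> by (intro bexI[of _ "g1 + (b - g2)"]) auto
qed

lemma density_Inter_eq_prod:
  fixes J :: "nat \<Rightarrow> 'v::ab_group_add \<Rightarrow> 'w::ab_group_add"
  assumes sub: "add_subgroup V" and fin: "finite V"
    and hom: "\<And>i. i < N \<Longrightarrow> additive_on V (J i)"
    and det: "\<And>i. i < N \<Longrightarrow> determined_by V (J i) (A i)"
    and sep: "\<And>i f. i < N \<Longrightarrow> f \<in> V \<Longrightarrow> \<exists>g\<in>V. J i g = J i f \<and> (\<forall>j<N. j \<noteq> i \<longrightarrow> J j g = 0)"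
  shows "n \<le> N \<Longrightarrow> density V (\<Inter>i<n. A i) = (\<Prod>i<n. density V (A i))"
proof (induction n)
  case 0
  have "card V > 0"
    using sub fin unfolding add_subgroup_def by (auto simp: card_gt_0_iff)
  then show ?case
    by (simp add: density_def)
next
  case (Suc n)
  hence "n < N"
    by simp
  define \<psi> where "\<psi> f = (\<lambda>i. if i < n then J i f else 0)" for f
  have hom_\<psi>: "additive_on V \<psi>"
    unfolding additive_on_def
  proof (intro ballI ext)
    fix a b i assume "a \<in> V" "b \<in> V"
    show "\<psi> (a + b) i = (\<psi> a + \<psi> b) i"
      using hom[of i] \<open>n < N\<close> \<open>a \<in> V\<close> \<open>b \<in> V\<close> by (simp add: \<psi>_def additive_on_def)
  qed
  have det_\<psi>: "determined_by V \<psi> (\<Inter>i<n. A i)"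
    unfolding determined_by_def
  proof (intro ballI impI)
    fix f g assume fg: "f \<in> V" "g \<in> V" "\<psi> f = \<psi> g"
    have "f \<in> A i \<longleftrightarrow> g \<in> A i" if "i < n" for i
    proof -
      have "J i f = J i g"
        using fun_cong[OF fg(3), of i] that by (simp add: \<psi>_def)
      moreover have "determined_by V (J i) (A i)"
        using det[OF less_trans[OF that \<open>n < N\<close>]] .
      ultimately show ?thesis
        using fg(1,2) unfolding determined_by_def by blast
    qed
    thus "f \<in> (\<Inter>i<n. A i) \<longleftrightarrow> g \<in> (\<Inter>i<n. A i)"
      by blast
  qed
  have "\<exists>g\<in>V. J n g = J n a \<and> \<psi> g = \<psi> b" if ab: "a \<in> V" "b \<in> V" for a b
  proof -
    obtain g where "g \<in> V" "J n g = J n a" "\<forall>i<N. i \<noteq> n \<longrightarrow> J i g = J i b"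
      using separated_additive_maps_joint[OF sub hom sep \<open>n < N\<close> ab] by blast
    thus ?thesis
      using \<open>n < N\<close> by (intro bexI[of _ g]) (auto simp: \<psi>_def fun_eq_iff)
  qed
  hence "density V (A n \<inter> (\<Inter>i<n. A i)) = density V (A n) * density V (\<Inter>i<n. A i)"
    by (intro density_inter_determined[OF sub fin hom[OF \<open>n < N\<close>] hom_\<psi> det[OF \<open>n < N\<close>] det_\<psi>]) blast
  moreover have "(\<Inter>i<Suc n. A i) = A n \<inter> (\<Inter>i<n. A i)"
    unfolding lessThan_Suc by auto
  ultimately show ?case
    using Suc.IH \<open>n < N\<close> by (simp add: mult.commute)
qed

section \<open>The product formula\<close>

lemma finite_Rdeg: "finite (Rdeg d :: 'a::{finite,zero} poly3 set)"
proof -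
  let ?S = "{..d} \<times> {..d} \<times> {..d}"
  have "Rdeg d \<subseteq> {f. \<forall>m. (m \<in> ?S \<longrightarrow> f m \<in> UNIV) \<and> (m \<notin> ?S \<longrightarrow> f m = 0)}"
    unfolding Rdeg_def by force
  thus ?thesis
    by (rule finite_subset) (intro finite_set_of_finite_funs; simp)
qed

lemma add_subgroup_Rdeg: "add_subgroup (Rdeg d :: 'a::ab_group_add poly3 set)"
  unfolding add_subgroup_def Rdeg_def
  by (auto simp: plus_fun_def fun_diff_def zero_fun_def) (metis add.right_neutral, metis)

lemma jet_additive_on_Rdeg:
  fixes emb :: "'a::field \<Rightarrow> 'b::field"
  assumes "is_ring_hom emb"
  shows "additive_on (Rdeg d) (jet emb P)"
  unfolding additive_on_def
proof (intro ballI ext)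
  fix f g :: "'a poly3" and w
  assume "f \<in> Rdeg d" "g \<in> Rdeg d"
  hence fin: "finite {m. f m \<noteq> 0}" "finite {m. g m \<noteq> 0}"
    using finite_supp3_Rdeg unfolding supp3_def by blast+
  hence "f + g = poly_mapping.lookup (Abs_poly_mapping f + Abs_poly_mapping g)"
    by (simp add: lookup_add fun_eq_iff)
  thus "jet emb P (f + g) w = (jet emb P f + jet emb P g) w"
    using fin by (simp add: jet_lookup_add[OF assms])
qed

lemma cond_pt_nonzero:
  fixes emb :: "'a::field \<Rightarrow> 'b::field"
  assumes "is_ring_hom emb" "cond_valid emb C"
  shows "cond_pt emb C \<noteq> (0, 0, 0)"
  using assms emb3_eq_0_iff[of emb] ring_hom_eq_0_iff[OF assms(1)] by (cases C) auto

lemma mu_Inter_dset_eq_prod: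
  fixes emb :: "'a::{finite,field} \<Rightarrow> 'b::field" and Ds :: "(bool \<times> ('a, 'b) cond) list"
  defines "pt i \<equiv> cond_pt emb (snd (Ds ! i))"
  assumes emb: "is_ring_hom emb" and "d \<ge> 1"
    and sep: "\<forall>i<length Ds. \<forall>f\<in>Rdeg d. \<exists>g\<in>Rdeg d.
      jet emb (pt i) g = jet emb (pt i) f \<and> (\<forall>j<length Ds. j \<noteq> i \<longrightarrow> jet emb (pt j) g = 0)"
  shows "mu d (Rhomog \<inter> (\<Inter>D\<in>set Ds. dset emb D)) = (\<Prod>D\<leftarrow>Ds. mu d (dset emb D))"
proof -
  have "density (Rdeg d) (\<Inter>i<length Ds. dset emb (Ds ! i)) =
      (\<Prod>i<length Ds. density (Rdeg d) (dset emb (Ds ! i)))"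
  proof (rule density_Inter_eq_prod[where J = "\<lambda>i. jet emb (pt i)" and N = "length Ds"])
    show "determined_by (Rdeg d) (jet emb (pt i)) (dset emb (Ds ! i))" for i
      unfolding determined_by_def pt_def using dset_jet_cong[OF emb \<open>d \<ge> 1\<close>] by blast
  qed (use sep in \<open>auto simp: add_subgroup_Rdeg finite_Rdeg jet_additive_on_Rdeg[OF emb]\<close>)
  moreover have "(\<Inter>D\<in>set Ds. dset emb D) = (\<Inter>i<length Ds. dset emb (Ds ! i))"
    by (auto simp: set_conv_nth)
  moreover have "Rhomog \<inter> X \<inter> Rdeg d = X \<inter> Rdeg d" for X :: "'a poly3 set"
    using Rdeg_subset_Rhomog[OF \<open>d \<ge> 1\<close>] by blast
  ultimately show ?thesis
    unfolding mu_def prod.list_conv_set_nth atLeast0LessThan by (simp add: density_def)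
qed

lemma (in field_embedding) eventually_separation:
  fixes pt :: "nat \<Rightarrow> 'b triple"
  assumes i: "i < n" and nonzero: "\<And>j. j < n \<Longrightarrow> pt j \<noteq> (0, 0, 0)"
    and distinct: "\<And>i j. i < n \<Longrightarrow> j < n \<Longrightarrow> i \<noteq> j \<Longrightarrow>
      \<not> same_closed_pt (card (UNIV :: 'a set)) (pt i) (pt j)"
  shows "\<forall>\<^sub>F d in sequentially. \<forall>f\<in>Rdeg d. \<exists>g\<in>Rdeg d.
    jet emb (pt i) g = jet emb (pt i) f \<and> (\<forall>j<n. j \<noteq> i \<longrightarrow> jet emb (pt j) g = 0)"
proof -
  have "Q \<noteq> (0, 0, 0) \<and> \<not> same_closed_pt (card (UNIV :: 'a set)) (pt i) Q"
    if Q: "Q \<in> pt ` {j. j < n \<and> j \<noteq> i}" for Q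
  proof -
    obtain j where "j < n" "i \<noteq> j" "Q = pt j"
      using Q by blast
    thus ?thesis
      using nonzero distinct[OF i] by simp
  qed
  then obtain \<delta> h where "homog \<delta> h" "pm_eval emb h (pt i) \<noteq> 0"
    "\<forall>Q\<in>pt ` {j. j < n \<and> j \<noteq> i}. pm_eval emb h Q = 0"
    using exists_form_isolating_point[OF nonzero[OF i], of "pt ` {j. j < n \<and> j \<noteq> i}"] by auto
  from eventually_jet_transfer[OF emb this] show ?thesis
    by (rule eventually_mono) (simp add: image_iff imp_conjL)
qed

theorem lemma4p7:
  fixes emb :: "'a::{finite, field} \<Rightarrow> 'b::{finite, field}"
    and Ds :: "(bool \<times> ('a, 'b) cond) list"
  assumes "field_emb emb"
    and "\<forall>D\<in>set Ds. cond_valid emb (snd D)"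
    and "\<forall>i<length Ds. \<forall>j<length Ds. i \<noteq> j \<longrightarrow>
           \<not> same_closed_pt (card (UNIV :: 'a set)) (cond_pt emb (snd (Ds ! i))) (cond_pt emb (snd (Ds ! j)))"
  shows "\<exists>d0. \<forall>d\<ge>d0.
           mu d (Rhomog \<inter> (\<Inter>D\<in>set Ds. dset emb D)) = (\<Prod>D\<leftarrow>Ds. mu d (dset emb D))"
proof -
  have emb: "is_ring_hom emb"
    using assms(1) by (rule field_emb_is_ring_hom)
  interpret field_embedding emb
    by unfold_locales (rule emb)
  define pt where "pt i = cond_pt emb (snd (Ds ! i))" for i
  have "pt j \<noteq> (0, 0, 0)" if "j < length Ds" for j
    using cond_pt_nonzero[OF emb] assms(2) nth_mem[OF that] unfolding pt_def by blast
  moreover have "\<not> same_closed_pt (card (UNIV :: 'a set)) (pt i) (pt j)"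
    if "i < length Ds" "j < length Ds" "i \<noteq> j" for i j
    using assms(3) that unfolding pt_def by blast
  ultimately have "\<forall>\<^sub>F d in sequentially. \<forall>i\<in>{..<length Ds}. \<forall>f\<in>Rdeg d. \<exists>g\<in>Rdeg d.
      jet emb (pt i) g = jet emb (pt i) f \<and> (\<forall>j<length Ds. j \<noteq> i \<longrightarrow> jet emb (pt j) g = 0)"
    by (intro eventually_ball_finite ballI eventually_separation) auto
  moreover have "\<forall>\<^sub>F d in sequentially. 1 \<le> d"
    by (rule eventually_ge_at_top)
  ultimately have "\<forall>\<^sub>F d in sequentially.
      mu d (Rhomog \<inter> (\<Inter>D\<in>set Ds. dset emb D)) = (\<Prod>D\<leftarrow>Ds. mu d (dset emb D))"
    by eventually_elim (use mu_Inter_dset_eq_prod[OF emb] in \<open>auto simp: pt_def\<close>)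
  thus ?thesis
    unfolding eventually_sequentially .
qed

end
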